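(* Let $S$ be a finite-dimensional quantum system and $\Phi$ any CPTP map on $S$ with trace-dual $\Phi^\dagger$. Let $H_0,H_\tau$ be Hermitian operators on $S$, $\beta>0$, and for $t\in\{0,\tau\}$ let $F_t=-\beta^{-1}\ln\operatorname{Tr}e^{-\beta H_t}$, $\Gamma_t=\exp[\beta(F_t-H_t)]$, $\Delta F=F_\tau-F_0$. Assume the initial state is $\rho_0=\Gamma_0$ and let $\Delta E=\operatorname{Tr}[\Phi(\Gamma_0)H_\tau]-\operatorname{Tr}[\Gamma_0H_0]$. Let $\gamma:=\Phi^\dagger(\Gamma_\tau)/\operatorname{Tr}[\Phi^\dagger(\Gamma_\tau)]$. Then $$\beta(\Delta E-\Delta F)\ \ge\ \frac{8}{\pi^2}\mathcal{L}^2(\Gamma_0,\gamma)-\ln\operatorname{Tr}[\Phi^\dagger(\Gamma_\tau)].$$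
   Context: The trace-dual $\Phi^\dagger$ satisfies $\operatorname{Tr}[\Phi(X)Y]=\operatorname{Tr}[X\Phi^\dagger(Y)]$ for all $X,Y$. For density matrices $\rho_1,\rho_2$, the fidelity is $\mathsf F(\rho_1,\rho_2)=\|\sqrt{\rho_1}\sqrt{\rho_2}\|_1$ (trace norm) and the Bures angle is $\mathcal L(\rho_1,\rho_2)=\arccos\mathsf F(\rho_1,\rho_2)$. *)

theory Defs
  imports Complex_Main "Jordan_Normal_Form.Matrix"
begin

definition cadj :: "complex mat \<Rightarrow> complex mat" where
  "cadj A = mat (dim_col A) (dim_row A) (\<lambda>(i,j). cnj (A $$ (j,i)))"

definition hermitian :: "nat \<Rightarrow> complex mat \<Rightarrow> bool" where
  "hermitian n A \<longleftrightarrow> A \<in> carrier_mat n n \<and> cadj A = A"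

definition psd :: "nat \<Rightarrow> complex mat \<Rightarrow> bool" where
  "psd n A \<longleftrightarrow> hermitian n A \<and>
     (\<forall>v \<in> carrier_vec n. 0 \<le> Re (\<Sum>i<n. cnj (v $ i) * (A *\<^sub>v v) $ i))"


definition trace :: "complex mat \<Rightarrow> complex" where
  "trace A = (\<Sum>i<dim_row A. A $$ (i,i))"

definition mat_exp :: "complex mat \<Rightarrow> complex mat" where
  "mat_exp A = mat (dim_row A) (dim_col A)
     (\<lambda>(i,j). \<Sum>k. (A ^\<^sub>m k) $$ (i,j) / of_nat (fact k))"

definition psd_sqrt :: "complex mat \<Rightarrow> complex mat" where
  "psd_sqrt A = (THE B. psd (dim_row A) B \<and> B * B = A)"

definition trace_norm :: "complex mat \<Rightarrow> real" where
  "trace_norm X = Re (trace (psd_sqrt (cadj X * X)))"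

definition fidelity :: "complex mat \<Rightarrow> complex mat \<Rightarrow> real" where
  "fidelity r1 r2 = trace_norm (psd_sqrt r1 * psd_sqrt r2)"

definition bures_angle :: "complex mat \<Rightarrow> complex mat \<Rightarrow> real" where
  "bures_angle r1 r2 = arccos (fidelity r1 r2)"

text \<open>Linear maps on operators of S and the CPTP property.
  (id_m \<otimes> Phi)(X) on C^m \<otimes> C^n, index (a,i) \<mapsto> a*n+i.\<close>
definition id_tensor :: "nat \<Rightarrow> nat \<Rightarrow> (complex mat \<Rightarrow> complex mat) \<Rightarrow> complex mat \<Rightarrow> complex mat" where
  "id_tensor m n \<Phi> X = mat (m*n) (m*n) (\<lambda>(p,q).
     \<Phi> (mat n n (\<lambda>(i,j). X $$ ((p div n) * n + i, (q div n) * n + j))) $$ (p mod n, q mod n))"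

definition linear_op_map :: "nat \<Rightarrow> (complex mat \<Rightarrow> complex mat) \<Rightarrow> bool" where
  "linear_op_map n \<Phi> \<longleftrightarrow>
     (\<forall>X \<in> carrier_mat n n. \<Phi> X \<in> carrier_mat n n) \<and>
     (\<forall>X \<in> carrier_mat n n. \<forall>Y \<in> carrier_mat n n. \<Phi> (X + Y) = \<Phi> X + \<Phi> Y) \<and>
     (\<forall>X \<in> carrier_mat n n. \<forall>c. \<Phi> (c \<cdot>\<^sub>m X) = c \<cdot>\<^sub>m \<Phi> X)"

definition completely_positive :: "nat \<Rightarrow> (complex mat \<Rightarrow> complex mat) \<Rightarrow> bool" where
  "completely_positive n \<Phi> \<longleftrightarrow>
     (\<forall>m X. psd (m*n) X \<longrightarrow> psd (m*n) (id_tensor m n \<Phi> X))"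

definition trace_preserving :: "nat \<Rightarrow> (complex mat \<Rightarrow> complex mat) \<Rightarrow> bool" where
  "trace_preserving n \<Phi> \<longleftrightarrow> (\<forall>X \<in> carrier_mat n n. trace (\<Phi> X) = trace X)"

definition CPTP :: "nat \<Rightarrow> (complex mat \<Rightarrow> complex mat) \<Rightarrow> bool" where
  "CPTP n \<Phi> \<longleftrightarrow> linear_op_map n \<Phi> \<and> completely_positive n \<Phi> \<and> trace_preserving n \<Phi>"

definition is_trace_dual :: "nat \<Rightarrow> (complex mat \<Rightarrow> complex mat) \<Rightarrow> (complex mat \<Rightarrow> complex mat) \<Rightarrow> bool" where
  "is_trace_dual n \<Phi> \<Phi>' \<longleftrightarrow>
     (\<forall>Y \<in> carrier_mat n n. \<Phi>' Y \<in> carrier_mat n n) \<and>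
     (\<forall>X \<in> carrier_mat n n. \<forall>Y \<in> carrier_mat n n. trace (\<Phi> X * Y) = trace (X * \<Phi>' Y))"

definition free_energy :: "nat \<Rightarrow> real \<Rightarrow> complex mat \<Rightarrow> real" where
  "free_energy n \<beta> H = - (1/\<beta>) * ln (Re (trace (mat_exp (complex_of_real (-\<beta>) \<cdot>\<^sub>m H))))"

definition gibbs :: "nat \<Rightarrow> real \<Rightarrow> complex mat \<Rightarrow> complex mat" where
  "gibbs n \<beta> H = mat_exp (complex_of_real \<beta> \<cdot>\<^sub>m
      (complex_of_real (free_energy n \<beta> H) \<cdot>\<^sub>m 1\<^sub>m n - H))"

end

theory Submission
  imports Defs "Jordan_Normal_Form.Schur_Decomposition"
begin

text \<open>Diagonalise \<open>\<Gamma>\<^sub>0 = \<Sum>\<^sub>i p\<^sub>i |u\<^sub>i\<rangle>\<langle>u\<^sub>i|\<close> and \<open>\<Gamma>\<^sub>\<tau> = \<Sum>\<^sub>j q\<^sub>j |v\<^sub>j\<rangle>\<langle>v\<^sub>j|\<close> and let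
  \<open>a\<^sub>i\<^sub>j = \<langle>v\<^sub>j| \<Phi>(|u\<^sub>i\<rangle>\<langle>u\<^sub>i|) |v\<^sub>j\<rangle>\<close>, a stochastic matrix because \<open>\<Phi>\<close> is CPTP.
  Then \<open>\<beta>(\<Delta>E - \<Delta>F) = \<Sum>\<^sub>i\<^sub>j p\<^sub>i a\<^sub>i\<^sub>j ln (p\<^sub>i / q\<^sub>j)\<close>, and concavity of \<open>ln\<close> bounds this
  below by \<open>-2 ln \<tau>\<close> with \<open>\<tau> = \<Sum>\<^sub>i\<^sub>j \<surd>p\<^sub>i a\<^sub>i\<^sub>j \<surd>q\<^sub>j\<close>.
  The dual \<open>\<Phi>'\<close> is positive and unital, so Kadison's inequality gives
  \<open>\<Phi>'(\<surd>\<Gamma>\<^sub>\<tau>)\<^sup>2 \<le> \<Phi>'(\<Gamma>\<^sub>\<tau>)\<close>, and operator monotonicity of the square root turns this into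
  \<open>\<Phi>'(\<surd>\<Gamma>\<^sub>\<tau>) \<le> \<surd>\<Phi>'(\<Gamma>\<^sub>\<tau>)\<close>. Taking \<open>\<langle>u\<^sub>i|\<cdot>|u\<^sub>i\<rangle>\<close> yields
  \<open>\<F>(\<Gamma>\<^sub>0, \<gamma>) \<ge> Re Tr (\<surd>\<Gamma>\<^sub>0 \<surd>\<gamma>) \<ge> \<tau> / \<surd>Z\<close>. Hence
  \<open>-2 ln \<tau> \<ge> -ln Z - 2 ln \<F>\<close>, and \<open>-2 ln \<F> \<ge> \<L>\<^sup>2 \<ge> (8/\<pi>\<^sup>2) \<L>\<^sup>2\<close> because
  \<open>ln cos x \<le> -x\<^sup>2/2\<close> on \<open>[0, \<pi>/2)\<close>.\<close>

section \<open>Matrices, adjoints and traces\<close>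

text \<open>Entries of products are written as sums over \<open>{..<n}\<close>, the form used by all
  index computations below.\<close>

lemma index_mult_mat_lessThan [simp]:
  "i < dim_row A \<Longrightarrow> j < dim_col B \<Longrightarrow> dim_col A = dim_row B \<Longrightarrow>
    (A * B) $$ (i,j) = (\<Sum>k<dim_row B. A $$ (i,k) * B $$ (k,j))"
  by (auto simp: scalar_prod_def atLeast0LessThan intro!: sum.cong)

lemma index_mult_mat_vec_lessThan [simp]:
  "i < dim_row A \<Longrightarrow> dim_col A = dim_vec v \<Longrightarrow> (A *\<^sub>v v) $ i = (\<Sum>k<dim_vec v. A $$ (i,k) * v $ k)"
  by (auto simp: scalar_prod_def atLeast0LessThan intro!: sum.cong)

declare index_mult_mat(1)[simp del] index_mult_mat_vec[simp del]

lemma mult_carrier_square [simp]: "A \<in> carrier_mat n n \<Longrightarrow> B \<in> carrier_mat n n \<Longrightarrow> A * B \<in> carrier_mat n n"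
  by (rule mult_carrier_mat)

lemma assoc_mult_square:
  "A \<in> carrier_mat n n \<Longrightarrow> B \<in> carrier_mat n n \<Longrightarrow> C \<in> carrier_mat n n \<Longrightarrow> A * B * C = A * (B * C)"
  by (rule assoc_mult_mat)

lemma cadj_dims [simp]: "dim_row (cadj A) = dim_col A" "dim_col (cadj A) = dim_row A"
  by (auto simp: cadj_def)

lemma index_cadj [simp]: "i < dim_col A \<Longrightarrow> j < dim_row A \<Longrightarrow> cadj A $$ (i,j) = cnj (A $$ (j,i))"
  by (simp add: cadj_def)

lemma cadj_carrier [simp]: "A \<in> carrier_mat r c \<Longrightarrow> cadj A \<in> carrier_mat c r"
  unfolding carrier_mat_def by simp

lemma cadj_cadj [simp]: "cadj (cadj A) = A"
  by (rule eq_matI) auto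

lemma cadj_mult: "A \<in> carrier_mat r k \<Longrightarrow> B \<in> carrier_mat k c \<Longrightarrow> cadj (A * B) = cadj B * cadj A"
  by (rule eq_matI) (auto simp: mult.commute)

lemma cadj_minus: "A \<in> carrier_mat r c \<Longrightarrow> B \<in> carrier_mat r c \<Longrightarrow> cadj (A - B) = cadj A - cadj B"
  by (rule eq_matI) auto

lemma cadj_smult: "cadj (a \<cdot>\<^sub>m A) = cnj a \<cdot>\<^sub>m cadj A"
  by (rule eq_matI) auto

lemma hermitian_carrier: "hermitian n A \<Longrightarrow> A \<in> carrier_mat n n"
  by (simp add: hermitian_def)

lemma hermitian_cadj: "hermitian n A \<Longrightarrow> cadj A = A"
  by (simp add: hermitian_def)

lemma hermitian_index: "hermitian n A \<Longrightarrow> i < n \<Longrightarrow> j < n \<Longrightarrow> A $$ (i,j) = cnj (A $$ (j,i))"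
  unfolding hermitian_def by (metis carrier_matD index_cadj)

lemma hermitianI:
  assumes A: "A \<in> carrier_mat n n" and h: "\<And>i j. i < n \<Longrightarrow> j < n \<Longrightarrow> A $$ (i,j) = cnj (A $$ (j,i))"
  shows "hermitian n A"
proof -
  have "cadj A = A"
  proof (rule eq_matI)
    fix i j assume "i < dim_row A" "j < dim_col A"
    then show "cadj A $$ (i,j) = A $$ (i,j)" using A h[of i j] by simp
  qed (use A in auto)
  then show ?thesis using A by (simp add: hermitian_def)
qed

lemma hermitian_minus: "hermitian n A \<Longrightarrow> hermitian n B \<Longrightarrow> hermitian n (A - B)"
  unfolding hermitian_def using cadj_minus[of A n n B] by auto

lemma hermitian_mult_self: "hermitian n A \<Longrightarrow> hermitian n (A * A)"
  unfolding hermitian_def using cadj_mult[of A n n A n] by auto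

lemma trace_add: "A \<in> carrier_mat n n \<Longrightarrow> B \<in> carrier_mat n n \<Longrightarrow> trace (A + B) = trace A + trace B"
  by (simp add: trace_def sum.distrib)

lemma trace_smult: "A \<in> carrier_mat n n \<Longrightarrow> trace (c \<cdot>\<^sub>m A) = c * trace A"
  unfolding trace_def by (auto simp: sum_distrib_left intro!: sum.cong)

lemma trace_comm:
  assumes A: "A \<in> carrier_mat n n" and B: "B \<in> carrier_mat n n"
  shows "trace (A * B) = trace (B * A)"
proof -
  have "trace (A * B) = (\<Sum>i<n. \<Sum>k<n. A $$ (i,k) * B $$ (k,i))" using A B by (simp add: trace_def)
  also have "\<dots> = (\<Sum>k<n. \<Sum>i<n. A $$ (i,k) * B $$ (k,i))" by (rule sum.swap)
  also have "\<dots> = trace (B * A)" using A B by (simp add: trace_def mult.commute)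
  finally show ?thesis .
qed

lemma trace_matrix_unit_mult:
  assumes K: "K \<in> carrier_mat n n" and a: "a < n" and b: "b < n"
  shows "trace (mat n n (\<lambda>(i,j). if i = b \<and> j = a then 1 else 0) * K) = K $$ (a,b)"
proof -
  have "trace (mat n n (\<lambda>(i,j). if i = b \<and> j = a then 1 else 0) * K)
      = (\<Sum>i<n. \<Sum>k<n. (if i = b \<and> k = a then 1 else 0) * K $$ (k,i))"
    using K by (simp add: trace_def)
  also have "\<dots> = (\<Sum>i<n. if i = b then K $$ (a,i) else 0)"
  proof (rule sum.cong[OF refl])
    fix i
    have e: "\<And>P x. (if P then 1 else 0) * x = (if P then x else (0::complex))" by simp
    show "(\<Sum>k<n. (if i = b \<and> k = a then 1 else 0) * K $$ (k,i)) = (if i = b then K $$ (a,i) else 0)"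
      using a by (cases "i = b") (simp_all only: e, simp_all)
  qed
  also have "\<dots> = K $$ (a,b)" using b by simp
  finally show ?thesis .
qed

lemma eq_mat_if_trace_mult_eq:
  assumes M: "M \<in> carrier_mat n n" and N: "N \<in> carrier_mat n n"
    and h: "\<And>X. X \<in> carrier_mat n n \<Longrightarrow> trace (X * M) = trace (X * N)"
  shows "M = N"
proof (rule eq_matI)
  fix a b assume "a < dim_row N" "b < dim_col N"
  then have a: "a < n" and b: "b < n" using N by auto
  define E :: "complex mat" where "E = mat n n (\<lambda>(i,j). if i = b \<and> j = a then 1 else 0)"
  have "M $$ (a,b) = trace (E * M)" unfolding E_def by (rule trace_matrix_unit_mult[OF M a b, symmetric])
  also have "\<dots> = trace (E * N)" by (rule h) (simp add: E_def)
  also have "\<dots> = N $$ (a,b)" unfolding E_def by (rule trace_matrix_unit_mult[OF N a b])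
  finally show "M $$ (a,b) = N $$ (a,b)" .
qed (use M N in auto)

section \<open>The inner product of \<open>\<complex>\<^sup>n\<close>\<close>

definition cinner :: "complex vec \<Rightarrow> complex vec \<Rightarrow> complex" where
  "cinner x y = (\<Sum>i<dim_vec x. cnj (x $ i) * y $ i)"

lemma cinner_eq_cscalar_prod: "v \<in> carrier_vec n \<Longrightarrow> w \<in> carrier_vec n \<Longrightarrow> cinner v w = w \<bullet>c v"
  by (auto simp: cinner_def scalar_prod_def atLeast0LessThan mult.commute)

lemma cinner_self: "cinner v v = complex_of_real (\<Sum>i<dim_vec v. (cmod (v $ i))\<^sup>2)"
  unfolding cinner_def of_real_sum
proof (rule sum.cong)
  fix i show "cnj (v $ i) * v $ i = complex_of_real ((cmod (v $ i))\<^sup>2)"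
    using complex_norm_square[of "v $ i"] by (simp only: mult.commute)
qed simp

lemma re_cinner_self_nonneg: "0 \<le> Re (cinner v v)"
  by (simp add: cinner_self sum_nonneg)

lemma psd_iff: "psd n A \<longleftrightarrow> hermitian n A \<and> (\<forall>v\<in>carrier_vec n. 0 \<le> Re (cinner v (A *\<^sub>v v)))"
proof -
  have "(\<Sum>i<n. cnj (v $ i) * (A *\<^sub>v v) $ i) = cinner v (A *\<^sub>v v)" if "v \<in> carrier_vec n" for v
    using that by (simp add: cinner_def)
  then show ?thesis unfolding psd_def by auto
qed

lemma psd_hermitian: "psd n A \<Longrightarrow> hermitian n A"
  by (simp add: psd_def)

lemma psd_carrier: "psd n A \<Longrightarrow> A \<in> carrier_mat n n"
  by (simp add: psd_def hermitian_def)

lemma psd_cinner_nonneg: "psd n A \<Longrightarrow> x \<in> carrier_vec n \<Longrightarrow> 0 \<le> Re (cinner x (A *\<^sub>v x))"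
  by (simp add: psd_iff)

lemma cinner_add_left: "dim_vec y = dim_vec x \<Longrightarrow> dim_vec z = dim_vec x \<Longrightarrow> cinner (y + z) x = cinner y x + cinner z x"
  by (simp add: cinner_def sum.distrib algebra_simps)

lemma cinner_add_right: "dim_vec y = dim_vec x \<Longrightarrow> dim_vec z = dim_vec x \<Longrightarrow> cinner x (y + z) = cinner x y + cinner x z"
  by (simp add: cinner_def sum.distrib algebra_simps)

lemma cinner_minus_left: "dim_vec y = dim_vec x \<Longrightarrow> dim_vec z = dim_vec x \<Longrightarrow> cinner (y - z) x = cinner y x - cinner z x"
  by (simp add: cinner_def sum_subtractf algebra_simps)

lemma cinner_minus_right: "dim_vec y = dim_vec x \<Longrightarrow> dim_vec z = dim_vec x \<Longrightarrow> cinner x (y - z) = cinner x y - cinner x z"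
  by (simp add: cinner_def sum_subtractf algebra_simps)

lemma cinner_smult_left: "cinner (c \<cdot>\<^sub>v y) x = cnj c * cinner y x"
  by (simp add: cinner_def sum_distrib_left algebra_simps)

lemma cinner_smult_right: "dim_vec y = dim_vec x \<Longrightarrow> cinner x (c \<cdot>\<^sub>v y) = c * cinner x y"
  by (simp add: cinner_def sum_distrib_left algebra_simps)

lemma cinner_commute: "dim_vec y = dim_vec x \<Longrightarrow> cinner y x = cnj (cinner x y)"
  by (simp add: cinner_def mult.commute)

lemma cinner_adjoint:
  assumes A: "A \<in> carrier_mat n n" and x: "x \<in> carrier_vec n" and y: "y \<in> carrier_vec n"
  shows "cinner x (A *\<^sub>v y) = cinner (cadj A *\<^sub>v x) y"
proof -
  have "cinner x (A *\<^sub>v y) = (\<Sum>a<n. \<Sum>b<n. cnj (x $ a) * A $$ (a,b) * y $ b)"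
    using A x y by (simp add: cinner_def sum_distrib_left mult.assoc)
  also have "\<dots> = (\<Sum>b<n. \<Sum>a<n. cnj (x $ a) * A $$ (a,b) * y $ b)" by (rule sum.swap)
  also have "\<dots> = cinner (cadj A *\<^sub>v x) y"
    using A x y by (simp add: cinner_def sum_distrib_right sum_distrib_left mult.commute mult.left_commute)
  finally show ?thesis .
qed

lemma cinner_hermitian:
  "hermitian n A \<Longrightarrow> x \<in> carrier_vec n \<Longrightarrow> y \<in> carrier_vec n \<Longrightarrow> cinner x (A *\<^sub>v y) = cinner (A *\<^sub>v x) y"
  using cinner_adjoint[of A n x y] by (simp add: hermitian_def)

lemma cinner_mult_self:
  "A \<in> carrier_mat n n \<Longrightarrow> x \<in> carrier_vec n \<Longrightarrow> cinner x ((cadj A * A) *\<^sub>v x) = cinner (A *\<^sub>v x) (A *\<^sub>v x)"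
  using cinner_adjoint[of "cadj A" n x "A *\<^sub>v x"] assoc_mult_mat_vec[of "cadj A" n n A n x] by simp

lemma hermitian_cinner_real:
  assumes A: "hermitian n A" and x: "x \<in> carrier_vec n"
  shows "cinner x (A *\<^sub>v x) = complex_of_real (Re (cinner x (A *\<^sub>v x)))"
proof -
  have "cinner x (A *\<^sub>v x) = cnj (cinner x (A *\<^sub>v x))"
    using cinner_hermitian[OF A x x] cinner_commute[of x "A *\<^sub>v x"] hermitian_carrier[OF A] x by simp
  from arg_cong[OF this, of Im] have "Im (cinner x (A *\<^sub>v x)) = 0" by simp
  then show ?thesis by (simp add: complex_eq_iff)
qed

lemma cinner_smult_mat:
  assumes Q: "Q \<in> carrier_mat n n" and z: "z \<in> carrier_vec n" and y: "y \<in> carrier_vec n"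
  shows "cinner y ((c \<cdot>\<^sub>m Q) *\<^sub>v z) = c * cinner y (Q *\<^sub>v z)"
proof -
  have "(c \<cdot>\<^sub>m Q) *\<^sub>v z = c \<cdot>\<^sub>v (Q *\<^sub>v z)"
    using Q z by (intro eq_vecI) (auto simp: sum_distrib_left mult.assoc)
  then show ?thesis using Q z y by (simp add: cinner_smult_right)
qed

text \<open>Cauchy--Schwarz against a unit vector, by minimising
  \<open>2 Re \<langle>u, w\<rangle> \<le> t \<parallel>u\<parallel>\<^sup>2 + \<parallel>w\<parallel>\<^sup>2 / t\<close> over \<open>t > 0\<close>.\<close>

lemma re_cinner_le_norm:
  assumes uu: "cinner u u = 1" and d: "dim_vec w = dim_vec u"
  shows "Re (cinner u w) \<le> sqrt (Re (cinner w w))"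
proof -
  define s where "s = Re (cinner w w)"
  have s0: "s \<ge> 0" unfolding s_def by (rule re_cinner_self_nonneg)
  have key: "2 * Re (cinner u w) \<le> t + s / t" if t: "t > 0" for t
  proof -
    have entry: "2 * Re (cnj a * b) \<le> t * (cmod a)\<^sup>2 + (cmod b)\<^sup>2 / t" for a b :: complex
    proof -
      have "t * (t * (cmod a)\<^sup>2 + (cmod b)\<^sup>2 / t) - t * (2 * Re (cnj a * b))
          = (t * Re a - Re b)\<^sup>2 + (t * Im a - Im b)\<^sup>2"
        unfolding cmod_power2 using t by (simp add: field_simps power2_eq_square)
      then have "t * (2 * Re (cnj a * b)) \<le> t * (t * (cmod a)\<^sup>2 + (cmod b)\<^sup>2 / t)"
        using sum_power2_ge_zero[of "t * Re a - Re b" "t * Im a - Im b"] by linarith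
      then show ?thesis using t by simp
    qed
    have "2 * Re (cinner u w) = (\<Sum>i<dim_vec u. 2 * Re (cnj (u $ i) * w $ i))"
      by (simp add: cinner_def sum_distrib_left)
    also have "\<dots> \<le> (\<Sum>i<dim_vec u. t * (cmod (u $ i))\<^sup>2 + (cmod (w $ i))\<^sup>2 / t)"
      by (intro sum_mono entry)
    also have "\<dots> = t * Re (cinner u u) + s / t"
      unfolding s_def cinner_self using d by (simp add: sum.distrib sum_distrib_left sum_divide_distrib)
    finally show ?thesis using uu by simp
  qed
  show ?thesis
  proof (cases "s > 0")
    case True
    have "2 * Re (cinner u w) \<le> sqrt s + s / sqrt s" using key[of "sqrt s"] True by simp
    also have "s / sqrt s = sqrt s" using True by (simp add: real_div_sqrt)
    finally show ?thesis by (simp add: s_def)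
  next
    case False
    then have s: "s = 0" using s0 by simp
    show ?thesis
    proof (rule ccontr)
      assume "\<not> ?thesis"
      then have r: "Re (cinner u w) > 0" using s by (simp add: s_def)
      show False using key[OF r] s r by simp
    qed
  qed
qed

section \<open>Unitary diagonalisation\<close>

definition unitary :: "nat \<Rightarrow> complex mat \<Rightarrow> bool" where
  "unitary n U \<longleftrightarrow> U \<in> carrier_mat n n \<and> cadj U * U = 1\<^sub>m n \<and> U * cadj U = 1\<^sub>m n"

text \<open>\<open>udiag n U d\<close> is \<open>U diag(d) U\<^sup>*\<close>: for unitary \<open>U\<close>, the Hermitian matrix with eigenvalues
  \<open>d k\<close> and eigenvectors the columns of \<open>U\<close>.\<close>

definition udiag :: "nat \<Rightarrow> complex mat \<Rightarrow> (nat \<Rightarrow> real) \<Rightarrow> complex mat" where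
  "udiag n U d = mat n n (\<lambda>(a,b). \<Sum>k<n. U $$ (a,k) * complex_of_real (d k) * cnj (U $$ (b,k)))"

lemma unitary_carrier: "unitary n U \<Longrightarrow> U \<in> carrier_mat n n"
  by (simp add: unitary_def)

lemma udiag_carrier [simp]: "udiag n U d \<in> carrier_mat n n"
  and udiag_dims [simp]: "dim_row (udiag n U d) = n" "dim_col (udiag n U d) = n"
  by (auto simp: udiag_def)

lemma index_udiag [simp]:
  "a < n \<Longrightarrow> b < n \<Longrightarrow> udiag n U d $$ (a,b) = (\<Sum>k<n. U $$ (a,k) * complex_of_real (d k) * cnj (U $$ (b,k)))"
  by (simp add: udiag_def)

lemma unitary_cols_orthonormal:
  assumes "unitary n U" "i < n" "j < n"
  shows "(\<Sum>k<n. cnj (U $$ (k,i)) * U $$ (k,j)) = (if i = j then 1 else 0)"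
proof -
  have "(cadj U * U) $$ (i,j) = (if i = j then 1 else 0)" using assms by (auto simp: unitary_def)
  then show ?thesis using unitary_carrier[OF assms(1)] assms by simp
qed

lemma unitary_rows_orthonormal:
  assumes "unitary n U" "i < n" "j < n"
  shows "(\<Sum>k<n. U $$ (i,k) * cnj (U $$ (j,k))) = (if i = j then 1 else 0)"
proof -
  have "(U * cadj U) $$ (i,j) = (if i = j then 1 else 0)" using assms by (auto simp: unitary_def)
  then show ?thesis using unitary_carrier[OF assms(1)] assms by simp
qed

lemma unitaryI:
  assumes U: "U \<in> carrier_mat n n"
    and c: "\<And>i j. i < n \<Longrightarrow> j < n \<Longrightarrow> (\<Sum>k<n. cnj (U $$ (k,i)) * U $$ (k,j)) = (if i = j then 1 else 0)"
  shows "unitary n U"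
proof -
  have 1: "cadj U * U = 1\<^sub>m n"
    by (rule eq_matI) (use U c in auto)
  have "U * cadj U = 1\<^sub>m n"
    by (rule mat_mult_left_right_inverse[OF _ U 1]) (use U in auto)
  with 1 U show ?thesis by (auto simp: unitary_def)
qed

lemma unitary_mult:
  assumes "unitary n U" "unitary n V"
  shows "unitary n (U * V)"
proof -
  have U: "U \<in> carrier_mat n n" and V: "V \<in> carrier_mat n n" using assms by (auto simp: unitary_def)
  have "cadj (U * V) * (U * V) = cadj V * (cadj U * U) * V"
    using U V by (simp add: cadj_mult assoc_mult_square[of _ n])
  also have "\<dots> = 1\<^sub>m n" using assms U V by (simp add: unitary_def)
  finally have 1: "cadj (U * V) * (U * V) = 1\<^sub>m n" .
  have "U * V * cadj (U * V) = U * (V * cadj V) * cadj U"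
    using U V by (simp add: cadj_mult assoc_mult_square[of _ n])
  also have "\<dots> = 1\<^sub>m n" using assms U V by (simp add: unitary_def)
  finally show ?thesis using 1 U V by (simp add: unitary_def)
qed

lemma cinner_unitary_cols:
  assumes U: "unitary n U" and k: "k < n" and l: "l < n"
  shows "cinner (col U l) (col U k) = (if l = k then 1 else 0)"
  using unitary_cols_orthonormal[OF U l k] unitary_carrier[OF U] l k by (simp add: cinner_def)

lemma udiag_eq_mult:
  assumes U: "U \<in> carrier_mat n n"
  shows "udiag n U d = U * mat_diag n (\<lambda>k. complex_of_real (d k)) * cadj U"
proof (rule eq_matI)
  fix a b assume "a < dim_row (U * mat_diag n (\<lambda>k. complex_of_real (d k)) * cadj U)"
    "b < dim_col (U * mat_diag n (\<lambda>k. complex_of_real (d k)) * cadj U)"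
  then have a: "a < n" and b: "b < n" using U by auto
  have "U * mat_diag n (\<lambda>k. complex_of_real (d k)) = mat n n (\<lambda>(i,k). U $$ (i,k) * complex_of_real (d k))"
    using U by (simp add: mat_diag_mult_right[OF U])
  then show "udiag n U d $$ (a,b) = (U * mat_diag n (\<lambda>k. complex_of_real (d k)) * cadj U) $$ (a,b)"
    using U a b by simp
qed (use U in auto)

lemma unitary_conj_udiag:
  assumes W: "unitary n W" and V: "V \<in> carrier_mat n n"
  shows "W * udiag n V d * cadj W = udiag n (W * V) d"
proof -
  have Wc: "W \<in> carrier_mat n n" using W by (rule unitary_carrier)
  have "W * udiag n V d * cadj W = W * (V * mat_diag n (\<lambda>k. complex_of_real (d k)) * cadj V) * cadj W"
    using V by (simp add: udiag_eq_mult)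
  also have "\<dots> = (W * V) * mat_diag n (\<lambda>k. complex_of_real (d k)) * (cadj V * cadj W)"
    using Wc V by (simp add: assoc_mult_square[of _ n])
  also have "\<dots> = udiag n (W * V) d"
    using Wc V by (simp add: udiag_eq_mult cadj_mult)
  finally show ?thesis .
qed

lemma udiag_mult:
  assumes U: "unitary n U"
  shows "udiag n U a * udiag n U b = udiag n U (\<lambda>k. a k * b k)"
proof -
  have Uc: "U \<in> carrier_mat n n" using U by (rule unitary_carrier)
  let ?D = "\<lambda>d. mat_diag n (\<lambda>k. complex_of_real (d k))"
  have "udiag n U a * udiag n U b = U * ?D a * (cadj U * U) * ?D b * cadj U"
    using Uc by (simp add: udiag_eq_mult assoc_mult_square[of _ n])
  also have "\<dots> = U * (?D a * ?D b) * cadj U"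
    using Uc U by (simp add: unitary_def assoc_mult_square[of _ n] left_mult_one_mat[of _ n n])
  also have "\<dots> = udiag n U (\<lambda>k. a k * b k)" using Uc by (simp add: udiag_eq_mult)
  finally show ?thesis .
qed

lemma udiag_one:
  assumes U: "unitary n U"
  shows "udiag n U (\<lambda>_. 1) = 1\<^sub>m n"
  by (rule eq_matI) (use unitary_rows_orthonormal[OF U] in auto)

lemma udiag_minus: "udiag n U a - udiag n U b = udiag n U (\<lambda>k. a k - b k)"
  by (rule eq_matI) (simp_all add: sum_subtractf left_diff_distrib right_diff_distrib)

lemma udiag_smult: "complex_of_real c \<cdot>\<^sub>m udiag n U a = udiag n U (\<lambda>k. c * a k)"
  by (rule eq_matI) (auto simp: sum_distrib_left algebra_simps)

lemma udiag_cong: "(\<And>k. k < n \<Longrightarrow> a k = b k) \<Longrightarrow> udiag n U a = udiag n U b"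
  unfolding udiag_def by (intro eq_matI) auto

lemma udiag_power:
  assumes U: "unitary n U"
  shows "udiag n U d ^\<^sub>m m = udiag n U (\<lambda>k. d k ^ m)"
  by (induction m) (simp_all add: udiag_one[OF U] udiag_mult[OF U] mult.commute)

lemma hermitian_udiag: "hermitian n (udiag n U d)"
  by (rule hermitianI) (auto simp: mult.commute mult.left_commute)

lemma udiag_mult_col:
  assumes U: "unitary n U" and k: "k < n"
  shows "udiag n U d *\<^sub>v col U k = complex_of_real (d k) \<cdot>\<^sub>v col U k"
proof (rule eq_vecI)
  have Uc: "U \<in> carrier_mat n n" using U by (rule unitary_carrier)
  fix i assume "i < dim_vec (complex_of_real (d k) \<cdot>\<^sub>v col U k)"
  then have i: "i < n" using Uc by simp
  have "(udiag n U d *\<^sub>v col U k) $ i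
      = (\<Sum>b<n. \<Sum>l<n. U $$ (i,l) * complex_of_real (d l) * (cnj (U $$ (b,l)) * U $$ (b,k)))"
    using i k Uc by (simp add: sum_distrib_right mult.assoc)
  also have "\<dots> = (\<Sum>l<n. U $$ (i,l) * complex_of_real (d l) * (\<Sum>b<n. cnj (U $$ (b,l)) * U $$ (b,k)))"
    by (subst sum.swap) (simp add: sum_distrib_left)
  also have "\<dots> = (\<Sum>l<n. if l = k then U $$ (i,k) * complex_of_real (d k) else 0)"
    using k by (intro sum.cong) (auto simp: unitary_cols_orthonormal[OF U])
  also have "\<dots> = (complex_of_real (d k) \<cdot>\<^sub>v col U k) $ i" using i k Uc by (simp add: mult.commute)
  finally show "(udiag n U d *\<^sub>v col U k) $ i = (complex_of_real (d k) \<cdot>\<^sub>v col U k) $ i" .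
qed (use unitary_carrier[OF U] in auto)

lemma cinner_udiag_col:
  assumes U: "unitary n U" and k: "k < n"
  shows "cinner (col U k) (udiag n U d *\<^sub>v col U k) = complex_of_real (d k)"
  using U k unitary_carrier[OF U]
  by (simp add: udiag_mult_col cinner_smult_right cinner_unitary_cols)

lemma trace_mult_udiag:
  assumes M: "M \<in> carrier_mat n n" and U: "U \<in> carrier_mat n n"
  shows "trace (M * udiag n U d) = (\<Sum>k<n. complex_of_real (d k) * cinner (col U k) (M *\<^sub>v col U k))"
proof -
  have "trace (M * udiag n U d)
      = (\<Sum>a<n. \<Sum>b<n. \<Sum>k<n. complex_of_real (d k) * (cnj (U $$ (a,k)) * (M $$ (a,b) * U $$ (b,k))))"
    using M by (simp add: trace_def sum_distrib_left algebra_simps)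
  also have "\<dots> = (\<Sum>k<n. \<Sum>a<n. \<Sum>b<n. complex_of_real (d k) * (cnj (U $$ (a,k)) * (M $$ (a,b) * U $$ (b,k))))"
    by (subst sum.swap, subst (2) sum.swap) simp
  also have "\<dots> = (\<Sum>k<n. complex_of_real (d k) * cinner (col U k) (M *\<^sub>v col U k))"
    using M U by (simp add: cinner_def sum_distrib_left)
  finally show ?thesis .
qed

lemma trace_eq_sum_cinner_cols:
  assumes U: "unitary n U" and A: "A \<in> carrier_mat n n"
  shows "trace A = (\<Sum>k<n. cinner (col U k) (A *\<^sub>v col U k))"
proof -
  have "trace A = trace (A * udiag n U (\<lambda>_. 1))" using A by (simp add: udiag_one[OF U])
  then show ?thesis by (simp add: trace_mult_udiag[OF A unitary_carrier[OF U]])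
qed

lemma trace_udiag:
  assumes U: "unitary n U"
  shows "trace (udiag n U d) = (\<Sum>k<n. complex_of_real (d k))"
  unfolding trace_eq_sum_cinner_cols[OF U udiag_carrier] by (intro sum.cong refl) (simp add: cinner_udiag_col[OF U])

lemma cinner_udiag:
  assumes x: "x \<in> carrier_vec n" and U: "U \<in> carrier_mat n n"
  shows "cinner x (udiag n U d *\<^sub>v x) = complex_of_real (\<Sum>k<n. d k * (cmod (cinner (col U k) x))\<^sup>2)"
proof -
  have col: "cinner (col U k) x = (\<Sum>b<n. cnj (U $$ (b,k)) * x $ b)" if "k < n" for k
    using U x that by (simp add: cinner_def)
  have "cinner x (udiag n U d *\<^sub>v x)
      = (\<Sum>a<n. \<Sum>b<n. \<Sum>k<n. complex_of_real (d k) * ((cnj (x $ a) * U $$ (a,k)) * (cnj (U $$ (b,k)) * x $ b)))"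
    using x by (simp add: cinner_def sum_distrib_left sum_distrib_right algebra_simps)
  also have "\<dots> = (\<Sum>k<n. complex_of_real (d k) * (cnj (cinner (col U k) x) * cinner (col U k) x))"
    by (subst sum.swap, subst (2) sum.swap)
      (simp add: col sum_distrib_left sum_product mult.commute mult.left_commute)
  also have "\<dots> = complex_of_real (\<Sum>k<n. d k * (cmod (cinner (col U k) x))\<^sup>2)"
    unfolding of_real_sum of_real_mult complex_norm_square by (simp add: mult.commute)
  finally show ?thesis .
qed

lemma psd_udiag:
  assumes U: "U \<in> carrier_mat n n" and d: "\<And>k. k < n \<Longrightarrow> d k \<ge> 0"
  shows "psd n (udiag n U d)"
  unfolding psd_iff using d by (auto simp: hermitian_udiag cinner_udiag[OF _ U] intro!: sum_nonneg)

lemma psd_udiag_nonneg: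
  assumes U: "unitary n U" and p: "psd n (udiag n U d)" and k: "k < n"
  shows "d k \<ge> 0"
  using psd_cinner_nonneg[OF p, of "col U k"] cinner_udiag_col[OF U k] unitary_carrier[OF U] k by simp

lemma unit_eigenvector_exists:
  assumes A: "(A::complex mat) \<in> carrier_mat n n" and n: "n > 0"
  obtains e v where "v \<in> carrier_vec n" "cinner v v = 1" "A *\<^sub>v v = e \<cdot>\<^sub>v v"
proof -
  obtain as where cp: "char_poly A = (\<Prod>a\<leftarrow>as. [:- a, 1:])" and len: "length as = n"
    using char_poly_factorized[OF A] by blast
  define e where "e = as ! 0"
  have "e \<in> set as" using len n by (simp add: e_def)
  then have "poly (char_poly A) e = 0"
    unfolding cp by (subst poly_prod_list_zero_iff) (auto intro!: bexI[of _ "[:- e, 1:]"])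
  then have "eigenvalue A e" using eigenvalue_root_char_poly[OF A] by simp
  then obtain v where "eigenvector A v e" by (auto simp: eigenvalue_def)
  then have v: "v \<in> carrier_vec n" and v0: "v \<noteq> 0\<^sub>v n" and ev: "A *\<^sub>v v = e \<cdot>\<^sub>v v"
    using A by (auto simp: eigenvector_def)
  define s where "s = Re (cinner v v)"
  have vv: "cinner v v = complex_of_real s" unfolding s_def by (simp add: cinner_self)
  have "s \<noteq> 0"
  proof
    assume "s = 0"
    then have "v \<bullet>c v = 0" using cinner_eq_cscalar_prod[OF v v] vv by simp
    then show False using v v0 by simp
  qed
  then have s: "s > 0" using re_cinner_self_nonneg[of v] by (simp add: s_def)
  define v1 where "v1 = complex_of_real (1 / sqrt s) \<cdot>\<^sub>v v"
  have "cinner v1 v1 = cnj (complex_of_real (1 / sqrt s)) * (complex_of_real (1 / sqrt s) * cinner v v)"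
    unfolding v1_def cinner_smult_left using v by (subst cinner_smult_right) auto
  also have "\<dots> = complex_of_real (1 / sqrt s * (1 / sqrt s) * s)"
    unfolding vv complex_cnj_complex_of_real of_real_mult by (simp only: mult.assoc)
  also have "1 / sqrt s * (1 / sqrt s) * s = 1" using s by (simp add: field_simps)
  finally have "cinner v1 v1 = 1" by simp
  moreover have "A *\<^sub>v v1 = e \<cdot>\<^sub>v v1"
    unfolding v1_def using A v ev by (simp add: mult_mat_vec smult_smult_assoc mult.commute)
  moreover have "v1 \<in> carrier_vec n" using v by (simp add: v1_def)
  ultimately show ?thesis using that by blast
qed

text \<open>Gram--Schmidt applied to a basis completion of \<open>v\<close>, with normalised columns.\<close>

lemma unitary_with_first_col:
  assumes v: "v \<in> carrier_vec n" and vv: "cinner v v = 1"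
  obtains W where "unitary n W" "\<And>i. i < n \<Longrightarrow> W $$ (i,0) = v $ i"
proof -
  have v0: "v \<noteq> 0\<^sub>v n" using vv v by (auto simp: cinner_def)
  interpret cof_vec_space n "TYPE(complex)" .
  define b where "b = basis_completion v"
  from basis_completion[OF v v0, folded b_def]
  have dist_b: "distinct b" and indep: "\<not> lin_dep (set b)" and bc: "set b \<subseteq> carrier_vec n"
    and hdb: "hd b = v" and len_b: "length b = n" by auto
  have n: "n > 0" using v0 len_b hdb v by (cases b) auto
  from hdb len_b n obtain vs where bv: "b = v # vs" by (cases b, auto)
  define ws where "ws = gram_schmidt n b"
  from gram_schmidt_result[OF bc dist_b indep refl, folded ws_def]
  have wsc: "set ws \<subseteq> carrier_vec n" and orth: "corthogonal ws" and lws: "length ws = n"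
    by (auto simp: len_b)
  have hdws: "hd ws = v" unfolding ws_def bv by (rule gram_schmidt_hd[OF v])
  have wj: "ws ! j \<in> carrier_vec n" if "j < n" for j using wsc lws that by auto
  define c where "c j = 1 / sqrt (Re (cinner (ws ! j) (ws ! j)))" for j
  define W where "W = mat n n (\<lambda>(i,j). complex_of_real (c j) * (ws ! j $ i))"
  have orth_ws: "cinner (ws ! i) (ws ! j) = 0" if "i < n" "j < n" "i \<noteq> j" for i j
    using corthogonalD[OF orth, of j i] that lws cinner_eq_cscalar_prod[OF wj[of i] wj[of j]] by auto
  have norm_ws: "c i * c i * Re (cinner (ws ! i) (ws ! i)) = 1"
    and real_ws: "cinner (ws ! i) (ws ! i) = complex_of_real (Re (cinner (ws ! i) (ws ! i)))" if "i < n" for i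
  proof -
    have "cinner (ws ! i) (ws ! i) \<noteq> 0"
      using corthogonalD[OF orth, of i i] that lws cinner_eq_cscalar_prod[OF wj[of i] wj[of i]] by auto
    moreover show real_ws: "cinner (ws ! i) (ws ! i) = complex_of_real (Re (cinner (ws ! i) (ws ! i)))"
      by (simp add: cinner_self)
    ultimately have "Re (cinner (ws ! i) (ws ! i)) > 0"
      using re_cinner_self_nonneg[of "ws ! i"] by (metis less_eq_real_def of_real_0)
    then show "c i * c i * Re (cinner (ws ! i) (ws ! i)) = 1" by (simp add: c_def field_simps)
  qed
  have "unitary n W"
  proof (rule unitaryI)
    fix i j assume i: "i < n" and j: "j < n"
    have "(\<Sum>k<n. cnj (W $$ (k,i)) * W $$ (k,j)) = complex_of_real (c i * c j) * cinner (ws ! i) (ws ! j)"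
      using wj[OF i] i j by (simp add: W_def cinner_def sum_distrib_left algebra_simps)
    also have "\<dots> = (if i = j then 1 else 0)"
    proof (cases "i = j")
      case True
      then have j: "j = i" by simp
      have "complex_of_real (c i * c j) * cinner (ws ! i) (ws ! j)
          = complex_of_real (c i * c i * Re (cinner (ws ! i) (ws ! i)))"
        unfolding j by (subst real_ws[OF i]) (simp only: of_real_mult)
      also have "\<dots> = 1" unfolding norm_ws[OF i] by simp
      finally show ?thesis unfolding if_P[OF True] .
    qed (use orth_ws[OF i j] in simp)
    finally show "(\<Sum>k<n. cnj (W $$ (k,i)) * W $$ (k,j)) = (if i = j then 1 else 0)" .
  qed (simp add: W_def)
  moreover have "W $$ (i,0) = v $ i" if "i < n" for i
  proof -
    have w0: "ws ! 0 = v" using hdws lws n by (cases ws) auto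
    have "c 0 = 1" using vv by (simp add: c_def w0)
    then show ?thesis using that n by (simp add: W_def w0)
  qed
  ultimately show ?thesis using that by blast
qed

lemma unitary_conj_first_col:
  assumes W: "unitary n W" and A: "A \<in> carrier_mat n n" and i: "i < n"
    and ev: "\<And>k. k < n \<Longrightarrow> (A * W) $$ (k,0) = e * W $$ (k,0)"
  shows "(cadj W * A * W) $$ (i,0) = (if i = 0 then e else 0)"
proof -
  have Wc: "W \<in> carrier_mat n n" using W by (rule unitary_carrier)
  have "(cadj W * A * W) $$ (i,0) = (cadj W * (A * W)) $$ (i,0)"
    using A Wc by (simp add: assoc_mult_square[of _ n])
  also have "\<dots> = (\<Sum>k<n. cadj W $$ (i,k) * (A * W) $$ (k,0))"
    using i A Wc by (subst index_mult_mat_lessThan) auto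
  also have "\<dots> = (\<Sum>k<n. cnj (W $$ (k,i)) * (e * W $$ (k,0)))"
    using i Wc by (intro sum.cong refl) (simp add: ev del: index_mult_mat_lessThan)
  also have "\<dots> = e * (\<Sum>k<n. cnj (W $$ (k,i)) * W $$ (k,0))"
    by (simp add: sum_distrib_left algebra_simps)
  also have "\<dots> = (if i = 0 then e else 0)"
    using unitary_cols_orthonormal[OF W i, of 0] i by simp
  finally show ?thesis .
qed

definition one_oplus :: "complex mat \<Rightarrow> complex mat" where
  "one_oplus U = mat (Suc (dim_row U)) (Suc (dim_col U))
     (\<lambda>(i,j). if i = 0 \<and> j = 0 then 1 else if i = 0 \<or> j = 0 then 0 else U $$ (i - 1, j - 1))"

lemma unitary_one_oplus:
  assumes U: "unitary m U"
  shows "unitary (Suc m) (one_oplus U)"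
proof (rule unitaryI)
  have Uc: "U \<in> carrier_mat m m" using U by (rule unitary_carrier)
  then show "one_oplus U \<in> carrier_mat (Suc m) (Suc m)" by (simp add: one_oplus_def)
  fix i j assume i: "i < Suc m" and j: "j < Suc m"
  have "(\<Sum>k<Suc m. cnj (one_oplus U $$ (k,i)) * one_oplus U $$ (k,j))
      = cnj (one_oplus U $$ (0,i)) * one_oplus U $$ (0,j)
        + (\<Sum>k<m. cnj (one_oplus U $$ (Suc k,i)) * one_oplus U $$ (Suc k,j))"
    by (rule sum.lessThan_Suc_shift)
  also have "\<dots> = (if i = j then 1 else 0)"
    using i j Uc by (cases i; cases j) (auto simp: one_oplus_def unitary_cols_orthonormal[OF U])
  finally show "(\<Sum>k<Suc m. cnj (one_oplus U $$ (k,i)) * one_oplus U $$ (k,j)) = (if i = j then 1 else 0)" .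
qed

lemma index_udiag_one_oplus:
  assumes U: "U \<in> carrier_mat m m" and i: "i < Suc m" and j: "j < Suc m"
  shows "udiag (Suc m) (one_oplus U) (case_nat r d) $$ (i,j)
    = (if i = 0 \<and> j = 0 then complex_of_real r else if i = 0 \<or> j = 0 then 0 else udiag m U d $$ (i - 1, j - 1))"
proof -
  have "udiag (Suc m) (one_oplus U) (case_nat r d) $$ (i,j)
      = one_oplus U $$ (i,0) * complex_of_real r * cnj (one_oplus U $$ (j,0))
        + (\<Sum>k<m. one_oplus U $$ (i,Suc k) * complex_of_real (d k) * cnj (one_oplus U $$ (j,Suc k)))"
    using i j by (simp del: sum.lessThan_Suc add: sum.lessThan_Suc_shift)
  then show ?thesis using U i j by (cases i; cases j) (auto simp: one_oplus_def)
qed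

theorem hermitian_spectral: "hermitian n A \<Longrightarrow> \<exists>U d. unitary n U \<and> A = udiag n U d"
proof (induction n arbitrary: A)
  case 0
  then have "A = udiag 0 (1\<^sub>m 0) (\<lambda>_. 0)" by (intro eq_matI) (auto simp: hermitian_def)
  moreover have "unitary 0 (1\<^sub>m 0)" by (rule unitaryI) auto
  ultimately show ?case by blast
next
  case (Suc m A)
  let ?n = "Suc m"
  have A: "A \<in> carrier_mat ?n ?n" using Suc.prems by (rule hermitian_carrier)
  obtain e v where v: "v \<in> carrier_vec ?n" and vv: "cinner v v = 1" and ev: "A *\<^sub>v v = e \<cdot>\<^sub>v v"
    using unit_eigenvector_exists[OF A] by blast
  obtain W where W: "unitary ?n W" and W0: "\<And>i. i < ?n \<Longrightarrow> W $$ (i,0) = v $ i"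
    using unitary_with_first_col[OF v vv] by blast
  have Wc: "W \<in> carrier_mat ?n ?n" using W by (rule unitary_carrier)
  define A' where "A' = cadj W * A * W"
  have hA': "hermitian ?n A'"
    using Suc.prems A Wc
    by (simp add: hermitian_def A'_def cadj_mult[of _ ?n ?n _ ?n] assoc_mult_square[of _ ?n])
  have col0: "A' $$ (i,0) = (if i = 0 then e else 0)" if "i < ?n" for i
    unfolding A'_def
  proof (rule unitary_conj_first_col[OF W A that])
    fix k assume k: "k < ?n"
    have "(A * W) $$ (k,0) = (A *\<^sub>v v) $ k" using A Wc k v W0 by simp
    then show "(A * W) $$ (k,0) = e * W $$ (k,0)" using ev k v W0 by simp
  qed
  have row0: "A' $$ (0,j) = (if j = 0 then cnj e else 0)" if "j < ?n" for j
    using hermitian_index[OF hA' _ that, of 0] col0[OF that] by simp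
  have "cnj e = e" using col0[of 0] row0[of 0] by simp
  from arg_cong[OF this, of Im] have e: "e = complex_of_real (Re e)" by (simp add: complex_eq_iff)
  define B where "B = mat m m (\<lambda>(i,j). A' $$ (Suc i, Suc j))"
  have "hermitian m B"
    by (rule hermitianI) (auto simp: B_def intro: hermitian_index[OF hA'])
  then obtain U d where U: "unitary m U" and B: "B = udiag m U d" using Suc.IH by blast
  have A'_udiag: "A' = udiag ?n (one_oplus U) (case_nat (Re e) d)"
  proof (rule eq_matI)
    fix i j assume "i < dim_row (udiag ?n (one_oplus U) (case_nat (Re e) d))"
      "j < dim_col (udiag ?n (one_oplus U) (case_nat (Re e) d))"
    then have i: "i < ?n" and j: "j < ?n" by auto
    have "B $$ (i - 1, j - 1) = A' $$ (i,j)" if "i \<noteq> 0" "j \<noteq> 0"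
      using that i j by (simp add: B_def)
    then show "A' $$ (i,j) = udiag ?n (one_oplus U) (case_nat (Re e) d) $$ (i,j)"
      unfolding index_udiag_one_oplus[OF unitary_carrier[OF U] i j] B[symmetric]
      using col0[OF i] row0[OF j] e by auto
  qed (use A Wc in \<open>auto simp: A'_def\<close>)
  have "A = W * A' * cadj W"
  proof -
    have "W * A' * cadj W = (W * cadj W) * A * (W * cadj W)"
      using Wc A by (simp add: A'_def assoc_mult_square[of _ ?n])
    then show ?thesis using W A by (simp add: unitary_def)
  qed
  also have "\<dots> = udiag ?n (W * one_oplus U) (case_nat (Re e) d)"
    unfolding A'_udiag by (rule unitary_conj_udiag[OF W]) (use unitary_one_oplus[OF U] in \<open>simp add: unitary_def\<close>)
  finally show ?case using unitary_mult[OF W unitary_one_oplus[OF U]] by blast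
qed

section \<open>Positive semidefinite matrices and their square roots\<close>

lemma psd_spectral:
  assumes M: "psd n M"
  obtains U d where "unitary n U" "\<And>k. k < n \<Longrightarrow> d k \<ge> 0" "M = udiag n U d"
proof -
  obtain U d where U: "unitary n U" and Md: "M = udiag n U d"
    using hermitian_spectral[OF psd_hermitian[OF M]] by blast
  then show ?thesis using that psd_udiag_nonneg[OF U] M by blast
qed

lemma psd_zero: "psd n (0\<^sub>m n n)"
  unfolding psd_iff hermitian_def by (auto simp: cinner_def intro!: eq_matI)

lemma psd_smult:
  assumes M: "psd n M" and c: "c \<ge> 0"
  shows "psd n (complex_of_real c \<cdot>\<^sub>m M)"
proof -
  obtain U d where U: "unitary n U" and d: "\<And>k. k < n \<Longrightarrow> d k \<ge> 0" and Md: "M = udiag n U d"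
    using psd_spectral[OF M] by blast
  show ?thesis unfolding Md udiag_smult by (rule psd_udiag[OF unitary_carrier[OF U]]) (use c d in simp)
qed

lemma psd_cadj_mult: "X \<in> carrier_mat n n \<Longrightarrow> psd n (cadj X * X)"
  unfolding psd_iff hermitian_def
  by (auto simp: cadj_mult[of _ n n _ n] cinner_mult_self re_cinner_self_nonneg)

lemma psd_antisym:
  assumes CB: "psd n (C - B)" and BC: "psd n (B - C)"
    and B: "B \<in> carrier_mat n n" and C: "C \<in> carrier_mat n n"
  shows "B = C"
proof -
  obtain U l where U: "unitary n U" and l: "\<And>k. k < n \<Longrightarrow> l k \<ge> 0" and X: "C - B = udiag n U l"
    using psd_spectral[OF CB] by blast
  have "B - C = udiag n U (\<lambda>k. - l k)"
  proof (rule eq_matI)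
    fix i j assume "i < dim_row (udiag n U (\<lambda>k. - l k))" "j < dim_col (udiag n U (\<lambda>k. - l k))"
    then have i: "i < n" and j: "j < n" by auto
    have "(B - C) $$ (i,j) = - ((C - B) $$ (i,j))" using B C i j by simp
    then show "(B - C) $$ (i,j) = udiag n U (\<lambda>k. - l k) $$ (i,j)"
      unfolding X using i j by (simp add: sum_negf[symmetric])
  qed (use B C in auto)
  then have l0: "l k = 0" if "k < n" for k
    using psd_udiag_nonneg[OF U, of "\<lambda>k. - l k" k] BC l[OF that] that by simp
  show ?thesis
  proof (rule eq_matI)
    fix i j assume "i < dim_row C" "j < dim_col C"
    then have i: "i < n" and j: "j < n" using C by auto
    have "(C - B) $$ (i,j) = 0" unfolding X using i j l0 by simp
    then show "B $$ (i,j) = C $$ (i,j)" using B C i j by simp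
  qed (use B C in auto)
qed

text \<open>Operator monotonicity of the square root, \<open>B\<^sup>2 \<le> D\<^sup>2 \<Longrightarrow> B \<le> D\<close> for \<open>B, D \<ge> 0\<close>:
  on a unit eigenvector \<open>u\<close> of \<open>D - B\<close> with eigenvalue \<open>l\<close> one has
  \<open>\<langle>u, (D\<^sup>2 - B\<^sup>2) u\<rangle> = l (2 \<langle>u, B u\<rangle> + l)\<close> and \<open>\<langle>u, D u\<rangle> = \<langle>u, B u\<rangle> + l\<close>,
  and both are nonnegative only if \<open>l \<ge> 0\<close>.\<close>

lemma psd_square_le_imp_le:
  assumes B: "psd n B" and D: "psd n D" and DB: "psd n (D * D - B * B)"
  shows "psd n (D - B)"
proof -
  have Bc: "B \<in> carrier_mat n n" and Dc: "D \<in> carrier_mat n n" using B D by (auto simp: psd_carrier)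
  have hB: "hermitian n B" and hD: "hermitian n D" using B D by (auto simp: psd_hermitian)
  obtain U l where U: "unitary n U" and X: "D - B = udiag n U l"
    using hermitian_spectral[OF hermitian_minus[OF hD hB]] by blast
  have Uc: "U \<in> carrier_mat n n" using U by (rule unitary_carrier)
  have "l k \<ge> 0" if k: "k < n" for k
  proof -
    define u where "u = col U k"
    have u: "u \<in> carrier_vec n" using Uc k by (simp add: u_def)
    have uu: "cinner u u = 1" using cinner_unitary_cols[OF U k k] by (simp add: u_def)
    have Xu: "(D - B) *\<^sub>v u = complex_of_real (l k) \<cdot>\<^sub>v u"
      unfolding X u_def by (rule udiag_mult_col[OF U k])
    have Du: "D *\<^sub>v u = B *\<^sub>v u + complex_of_real (l k) \<cdot>\<^sub>v u"
    proof (rule eq_vecI)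
      fix i assume "i < dim_vec (B *\<^sub>v u + complex_of_real (l k) \<cdot>\<^sub>v u)"
      then have i: "i < n" using Bc u by simp
      have "((D - B) *\<^sub>v u) $ i = (D *\<^sub>v u) $ i - (B *\<^sub>v u) $ i"
        using Bc Dc u i by (simp add: minus_mult_distrib_mat_vec)
      then show "(D *\<^sub>v u) $ i = (B *\<^sub>v u + complex_of_real (l k) \<cdot>\<^sub>v u) $ i"
        using Xu i u Bc by (simp add: algebra_simps)
    qed (use Bc Dc u in auto)
    define b where "b = Re (cinner u (B *\<^sub>v u))"
    have b: "cinner u (B *\<^sub>v u) = complex_of_real b" and bsym: "cinner (B *\<^sub>v u) u = complex_of_real b"
      using hermitian_cinner_real[OF hB u] cinner_hermitian[OF hB u u] by (simp_all add: b_def)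
    have dims: "dim_vec (B *\<^sub>v u) = n" "dim_vec u = n" using Bc u by auto
    have "cinner u ((D * D - B * B) *\<^sub>v u) = cinner (D *\<^sub>v u) (D *\<^sub>v u) - cinner (B *\<^sub>v u) (B *\<^sub>v u)"
      using Bc Dc u cinner_hermitian[OF hD u, of "D *\<^sub>v u"] cinner_hermitian[OF hB u, of "B *\<^sub>v u"]
      by (simp add: minus_mult_distrib_mat_vec[of _ n n] cinner_minus_right)
    also have "\<dots> = complex_of_real (l k * (2 * b + l k))"
      unfolding Du using dims uu b bsym
      by (simp add: cinner_add_left cinner_add_right cinner_smult_left cinner_smult_right algebra_simps)
    finally have c1: "0 \<le> l k * (2 * b + l k)" using psd_cinner_nonneg[OF DB u] by simp
    have c2: "0 \<le> b + l k"
      using psd_cinner_nonneg[OF D u] dims uu b by (simp add: Du cinner_add_right cinner_smult_right)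
    have b0: "0 \<le> b" using psd_cinner_nonneg[OF B u] by (simp add: b_def)
    show "l k \<ge> 0"
    proof (rule ccontr)
      assume "\<not> l k \<ge> 0"
      then have neg: "l k < 0" by simp
      with c1 have "2 * b + l k \<le> 0" by (simp add: zero_le_mult_iff)
      then show False using c2 neg b0 by linarith
    qed
  qed
  then show ?thesis unfolding X by (intro psd_udiag Uc)
qed

lemma psd_sqrt_unique:
  assumes B: "psd n B" and C: "psd n C" and e: "B * B = C * C"
  shows "B = C"
proof -
  have Bc: "B \<in> carrier_mat n n" and Cc: "C \<in> carrier_mat n n" using B C by (auto simp: psd_carrier)
  have "C * C - B * B = 0\<^sub>m n n" "B * B - C * C = 0\<^sub>m n n" using e Bc Cc by (auto intro!: eq_matI)
  then have "psd n (C - B)" "psd n (B - C)"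
    using psd_square_le_imp_le[OF B C] psd_square_le_imp_le[OF C B] psd_zero by simp_all
  then show ?thesis using psd_antisym Bc Cc by blast
qed

lemma psd_sqrt_eqI:
  assumes M: "psd n M" and B: "psd n B" and e: "B * B = M"
  shows "psd_sqrt M = B"
proof -
  have dM: "dim_row M = n" using psd_carrier[OF M] by simp
  show ?thesis unfolding psd_sqrt_def dM
  proof (rule the_equality)
    show "psd n B \<and> B * B = M" using B e by simp
    fix B' assume "psd n B' \<and> B' * B' = M"
    then show "B' = B" using psd_sqrt_unique[of n B' B] B e by auto
  qed
qed

lemma psd_sqrt_udiag:
  assumes U: "unitary n U" and d: "\<And>k. k < n \<Longrightarrow> d k \<ge> 0"
  shows "psd_sqrt (udiag n U d) = udiag n U (\<lambda>k. sqrt (d k))"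
proof (rule psd_sqrt_eqI)
  have Uc: "U \<in> carrier_mat n n" using U by (rule unitary_carrier)
  show "psd n (udiag n U d)" "psd n (udiag n U (\<lambda>k. sqrt (d k)))" using psd_udiag[OF Uc] d by auto
  show "udiag n U (\<lambda>k. sqrt (d k)) * udiag n U (\<lambda>k. sqrt (d k)) = udiag n U d"
    unfolding udiag_mult[OF U] using d by (intro udiag_cong) simp
qed

lemma psd_sqrt_psd:
  assumes M: "psd n M"
  shows "psd n (psd_sqrt M)"
proof -
  obtain U d where U: "unitary n U" and d: "\<And>k. k < n \<Longrightarrow> d k \<ge> 0" and Md: "M = udiag n U d"
    using psd_spectral[OF M] by blast
  have "psd_sqrt M = udiag n U (\<lambda>k. sqrt (d k))" using psd_sqrt_udiag[OF U, of d] d Md by simp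
  then show ?thesis using psd_udiag[OF unitary_carrier[OF U]] d by simp
qed

lemma psd_sqrt_mult_self:
  assumes M: "psd n M"
  shows "psd_sqrt M * psd_sqrt M = M"
proof -
  obtain U d where U: "unitary n U" and d: "\<And>k. k < n \<Longrightarrow> d k \<ge> 0" and Md: "M = udiag n U d"
    using psd_spectral[OF M] by blast
  have S: "psd_sqrt M = udiag n U (\<lambda>k. sqrt (d k))" using psd_sqrt_udiag[OF U, of d] d Md by simp
  have "udiag n U (\<lambda>k. sqrt (d k)) * udiag n U (\<lambda>k. sqrt (d k)) = udiag n U d"
    unfolding udiag_mult[OF U] using d by (intro udiag_cong) simp
  then show ?thesis using S Md by simp
qed

lemma psd_sqrt_smult:
  assumes M: "psd n M" and c: "c \<ge> 0"
  shows "psd_sqrt (complex_of_real c \<cdot>\<^sub>m M) = complex_of_real (sqrt c) \<cdot>\<^sub>m psd_sqrt M"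
proof -
  obtain U d where U: "unitary n U" and d: "\<And>k. k < n \<Longrightarrow> d k \<ge> 0" and Md: "M = udiag n U d"
    using psd_spectral[OF M] by blast
  have "psd_sqrt (complex_of_real c \<cdot>\<^sub>m M) = udiag n U (\<lambda>k. sqrt (c * d k))"
    unfolding Md udiag_smult using d c by (intro psd_sqrt_udiag[OF U]) simp
  also have "\<dots> = complex_of_real (sqrt c) \<cdot>\<^sub>m udiag n U (\<lambda>k. sqrt (d k))"
    by (simp add: udiag_smult real_sqrt_mult)
  also have "\<dots> = complex_of_real (sqrt c) \<cdot>\<^sub>m psd_sqrt M"
    using psd_sqrt_udiag[OF U, of d] d Md by simp
  finally show ?thesis .
qed

section \<open>Trace norm and fidelity\<close>

lemma re_trace_le_trace_norm:
  assumes X: "X \<in> carrier_mat n n"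
  shows "Re (trace X) \<le> trace_norm X"
proof -
  obtain U d where U: "unitary n U" and d: "\<And>k. k < n \<Longrightarrow> d k \<ge> 0" and M: "cadj X * X = udiag n U d"
    using psd_spectral[OF psd_cadj_mult[OF X]] by blast
  have Uc: "U \<in> carrier_mat n n" using U by (rule unitary_carrier)
  have "Re (trace X) = (\<Sum>k<n. Re (cinner (col U k) (X *\<^sub>v col U k)))"
    by (simp add: trace_eq_sum_cinner_cols[OF U X])
  also have "\<dots> \<le> (\<Sum>k<n. sqrt (d k))"
  proof (rule sum_mono)
    fix k assume "k \<in> {..<n}"
    then have k: "k < n" by simp
    have "Re (cinner (col U k) (X *\<^sub>v col U k)) \<le> sqrt (Re (cinner (X *\<^sub>v col U k) (X *\<^sub>v col U k)))"
      using X Uc k by (intro re_cinner_le_norm) (auto simp: cinner_unitary_cols[OF U])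
    also have "cinner (X *\<^sub>v col U k) (X *\<^sub>v col U k) = complex_of_real (d k)"
      using X Uc k cinner_mult_self[OF X, of "col U k"] cinner_udiag_col[OF U k, of d] by (simp add: M)
    finally show "Re (cinner (col U k) (X *\<^sub>v col U k)) \<le> sqrt (d k)" by simp
  qed
  also have "\<dots> = trace_norm X"
    using psd_sqrt_udiag[OF U, of d] d by (simp add: trace_norm_def M trace_udiag[OF U])
  finally show ?thesis .
qed

lemma trace_norm_smult:
  assumes X: "X \<in> carrier_mat n n" and c: "c \<ge> 0"
  shows "trace_norm (complex_of_real c \<cdot>\<^sub>m X) = c * trace_norm X"
proof -
  have M: "psd n (cadj X * X)" by (rule psd_cadj_mult[OF X])
  have "cadj (complex_of_real c \<cdot>\<^sub>m X) * (complex_of_real c \<cdot>\<^sub>m X) = complex_of_real (c * c) \<cdot>\<^sub>m (cadj X * X)"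
    using X by (auto intro!: eq_matI simp: cadj_smult sum_distrib_left algebra_simps)
  then have "psd_sqrt (cadj (complex_of_real c \<cdot>\<^sub>m X) * (complex_of_real c \<cdot>\<^sub>m X))
      = complex_of_real c \<cdot>\<^sub>m psd_sqrt (cadj X * X)"
    using psd_sqrt_smult[OF M, of "c * c"] c by simp
  then show ?thesis unfolding trace_norm_def
    using psd_carrier[OF psd_sqrt_psd[OF M]] by (simp add: trace_smult[of _ n])
qed

text \<open>Evaluating \<open>Tr \<bar>P Q\<bar>\<close> in an eigenbasis \<open>w\<^sub>j\<close> of \<open>Q\<close> (eigenvalues \<open>d\<^sub>j\<close>) gives
  \<open>\<Sum>\<^sub>j \<langle>w\<^sub>j, \<bar>P Q\<bar> w\<^sub>j\<rangle> \<le> \<Sum>\<^sub>j \<parallel>P Q w\<^sub>j\<parallel> = \<Sum>\<^sub>j d\<^sub>j \<parallel>P w\<^sub>j\<parallel> \<le> \<Sum>\<^sub>j (d\<^sub>j\<^sup>2 + \<parallel>P w\<^sub>j\<parallel>\<^sup>2) / 2\<close>.\<close>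

lemma trace_norm_mult_psd_le:
  assumes P: "psd n P" and Q: "psd n Q"
  shows "trace_norm (P * Q) \<le> (Re (trace (P * P)) + Re (trace (Q * Q))) / 2"
proof -
  obtain W d where W: "unitary n W" and d: "\<And>k. k < n \<Longrightarrow> d k \<ge> 0" and Qd: "Q = udiag n W d"
    using psd_spectral[OF Q] by blast
  have Pc: "P \<in> carrier_mat n n" and Qc: "Q \<in> carrier_mat n n" using P Q by (auto simp: psd_carrier)
  have Wc: "W \<in> carrier_mat n n" using W by (rule unitary_carrier)
  define X where "X = P * Q"
  have Xc: "X \<in> carrier_mat n n" using Pc Qc by (simp add: X_def)
  define S where "S = psd_sqrt (cadj X * X)"
  have S: "psd n S" "S * S = cadj X * X"
    unfolding S_def using psd_cadj_mult[OF Xc] by (auto simp: psd_sqrt_psd psd_sqrt_mult_self)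
  have Sc: "S \<in> carrier_mat n n" using S(1) by (rule psd_carrier)
  define a where "a j = Re (cinner (P *\<^sub>v col W j) (P *\<^sub>v col W j))" for j
  have a: "a j \<ge> 0" for j
    unfolding a_def by (rule re_cinner_self_nonneg)
  have a2: "cinner (P *\<^sub>v col W j) (P *\<^sub>v col W j) = complex_of_real (a j)" for j
    unfolding a_def by (simp add: cinner_self)
  have PP: "cinner (col W j) ((P * P) *\<^sub>v col W j) = complex_of_real (a j)" if "j < n" for j
    using that Pc Wc cinner_mult_self[OF Pc, of "col W j"] hermitian_cadj[OF psd_hermitian[OF P]] a2
    by simp
  have col: "Re (cinner (col W j) (S *\<^sub>v col W j)) \<le> (d j * d j + a j) / 2" if j: "j < n" for j
  proof -
    have w: "col W j \<in> carrier_vec n" "cinner (col W j) (col W j) = 1"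
      using Wc j cinner_unitary_cols[OF W j j] by auto
    have Xw: "X *\<^sub>v col W j = complex_of_real (d j) \<cdot>\<^sub>v (P *\<^sub>v col W j)"
      using Pc Wc j udiag_mult_col[OF W j, of d]
      by (simp add: X_def Qd assoc_mult_mat_vec[of _ n n _ n] mult_mat_vec[of _ n n])
    have "Re (cinner (col W j) (S *\<^sub>v col W j)) \<le> sqrt (Re (cinner (S *\<^sub>v col W j) (S *\<^sub>v col W j)))"
      using Sc w Wc by (intro re_cinner_le_norm) auto
    also have "cinner (S *\<^sub>v col W j) (S *\<^sub>v col W j) = cinner (X *\<^sub>v col W j) (X *\<^sub>v col W j)"
      using cinner_mult_self[OF Sc w(1)] cinner_mult_self[OF Xc w(1)]
        hermitian_cadj[OF psd_hermitian[OF S(1)]] S(2) by simp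
    also have "\<dots> = complex_of_real (d j * d j * a j)"
      unfolding Xw using Pc Wc j a2 by (simp add: cinner_smult_left cinner_smult_right)
    also have "sqrt (Re (complex_of_real (d j * d j * a j))) \<le> (d j * d j + a j) / 2"
      using arith_geo_mean_sqrt[of "d j * d j" "a j"] a by simp
    finally show ?thesis .
  qed
  have "trace_norm X = (\<Sum>j<n. Re (cinner (col W j) (S *\<^sub>v col W j)))"
    by (simp add: trace_norm_def S_def[symmetric] trace_eq_sum_cinner_cols[OF W Sc])
  also have "\<dots> \<le> (\<Sum>j<n. (d j * d j + a j) / 2)" by (intro sum_mono col) simp
  also have "\<dots> = ((\<Sum>j<n. a j) + (\<Sum>j<n. d j * d j)) / 2"
    by (simp add: sum.distrib sum_divide_distrib[symmetric])
  also have "(\<Sum>j<n. a j) = Re (trace (P * P))"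
    using trace_eq_sum_cinner_cols[OF W, of "P * P"] Pc by (simp add: PP)
  also have "(\<Sum>j<n. d j * d j) = Re (trace (Q * Q))"
    by (simp add: Qd udiag_mult[OF W] trace_udiag[OF W])
  finally show ?thesis by (simp add: X_def)
qed

lemma fidelity_le_one:
  assumes "psd n \<rho>" "psd n \<sigma>" "trace \<rho> = 1" "trace \<sigma> = 1"
  shows "fidelity \<rho> \<sigma> \<le> 1"
  using trace_norm_mult_psd_le[OF psd_sqrt_psd[OF assms(1)] psd_sqrt_psd[OF assms(2)]] assms
  by (simp add: fidelity_def psd_sqrt_mult_self)

section \<open>Positive maps and their trace duals\<close>

definition msum :: "nat \<Rightarrow> ('a \<Rightarrow> complex mat) \<Rightarrow> 'a set \<Rightarrow> complex mat" where
  "msum n f S = mat n n (\<lambda>(i,j). \<Sum>s\<in>S. f s $$ (i,j))"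

lemma msum_carrier [simp]: "msum n f S \<in> carrier_mat n n"
  and msum_dims [simp]: "dim_row (msum n f S) = n" "dim_col (msum n f S) = n"
  by (auto simp: msum_def)

lemma index_msum [simp]: "i < n \<Longrightarrow> j < n \<Longrightarrow> msum n f S $$ (i,j) = (\<Sum>s\<in>S. f s $$ (i,j))"
  by (simp add: msum_def)

lemma cinner_msum:
  assumes y: "y \<in> carrier_vec n" and z: "z \<in> carrier_vec n" and f: "\<And>s. s \<in> S \<Longrightarrow> f s \<in> carrier_mat n n"
  shows "cinner y (msum n f S *\<^sub>v z) = (\<Sum>s\<in>S. cinner y (f s *\<^sub>v z))"
proof -
  have "cinner y (msum n f S *\<^sub>v z) = (\<Sum>i<n. \<Sum>k<n. \<Sum>s\<in>S. cnj (y $ i) * (f s $$ (i,k) * z $ k))"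
    using y z by (simp add: cinner_def sum_distrib_left sum_distrib_right)
  also have "\<dots> = (\<Sum>s\<in>S. \<Sum>i<n. \<Sum>k<n. cnj (y $ i) * (f s $$ (i,k) * z $ k))"
    by (subst sum.swap, subst (2) sum.swap) simp
  also have "\<dots> = (\<Sum>s\<in>S. cinner y (f s *\<^sub>v z))"
  proof (rule sum.cong[OF refl])
    fix s assume "s \<in> S"
    then have "f s \<in> carrier_mat n n" by (rule f)
    then show "(\<Sum>i<n. \<Sum>k<n. cnj (y $ i) * (f s $$ (i,k) * z $ k)) = cinner y (f s *\<^sub>v z)"
      using y z by (simp add: cinner_def sum_distrib_left)
  qed
  finally show ?thesis .
qed

lemma cinner_msum_smult:
  assumes y: "y \<in> carrier_vec n" and z: "z \<in> carrier_vec n" and Q: "\<And>s. s \<in> S \<Longrightarrow> Q s \<in> carrier_mat n n"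
  shows "cinner y (msum n (\<lambda>s. c s \<cdot>\<^sub>m Q s) S *\<^sub>v z) = (\<Sum>s\<in>S. c s * cinner y (Q s *\<^sub>v z))"
  using Q by (simp add: cinner_msum[OF y z] cinner_smult_mat[OF _ z y])

lemma hermitian_msum_smult:
  assumes "\<And>s. s \<in> S \<Longrightarrow> hermitian n (Q s)"
  shows "hermitian n (msum n (\<lambda>s. complex_of_real (c s) \<cdot>\<^sub>m Q s) S)"
proof (rule hermitianI)
  fix i j assume i: "i < n" and j: "j < n"
  have "(complex_of_real (c s) \<cdot>\<^sub>m Q s) $$ (i,j) = cnj ((complex_of_real (c s) \<cdot>\<^sub>m Q s) $$ (j,i))"
    if "s \<in> S" for s
    using hermitian_index[OF assms[OF that] i j] hermitian_carrier[OF assms[OF that]] i j by simp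
  then show "msum n (\<lambda>s. complex_of_real (c s) \<cdot>\<^sub>m Q s) S $$ (i,j)
      = cnj (msum n (\<lambda>s. complex_of_real (c s) \<cdot>\<^sub>m Q s) S $$ (j,i))"
    using i j by (simp add: cnj_sum)
qed simp

definition outer :: "nat \<Rightarrow> complex vec \<Rightarrow> complex mat" where
  "outer n x = mat n n (\<lambda>(a,b). x $ a * cnj (x $ b))"

lemma outer_carrier [simp]: "outer n x \<in> carrier_mat n n"
  by (simp add: outer_def)

lemma trace_mult_outer:
  assumes M: "M \<in> carrier_mat n n" and x: "x \<in> carrier_vec n"
  shows "trace (M * outer n x) = cinner x (M *\<^sub>v x)"
  using M x by (simp add: trace_def outer_def cinner_def sum_distrib_left algebra_simps)

lemma psd_outer:
  assumes x: "x \<in> carrier_vec n"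
  shows "psd n (outer n x)"
  unfolding psd_iff
proof (intro conjI ballI)
  show "hermitian n (outer n x)" by (rule hermitianI) (auto simp: outer_def)
  fix v :: "complex vec" assume v: "v \<in> carrier_vec n"
  have "cinner v (outer n x *\<^sub>v v) = cnj (cinner x v) * cinner x v"
    using x v by (simp add: outer_def cinner_def sum_distrib_left sum_distrib_right algebra_simps)
  also have "\<dots> = complex_of_real ((cmod (cinner x v))\<^sup>2)"
    using complex_norm_square[of "cinner x v"] by (simp only: mult.commute)
  finally show "0 \<le> Re (cinner v (outer n x *\<^sub>v v))" by simp
qed

lemma udiag_eq_msum_outer:
  assumes V: "V \<in> carrier_mat n n"
  shows "udiag n V d = msum n (\<lambda>j. complex_of_real (d j) \<cdot>\<^sub>m outer n (col V j)) {..<n}"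
  by (rule eq_matI) (use V in \<open>auto simp: outer_def algebra_simps intro!: sum.cong\<close>)

lemma linear_op_map_carrier: "linear_op_map n \<Psi> \<Longrightarrow> X \<in> carrier_mat n n \<Longrightarrow> \<Psi> X \<in> carrier_mat n n"
  by (simp add: linear_op_map_def)

lemma linear_op_map_zero:
  assumes L: "linear_op_map n \<Psi>"
  shows "\<Psi> (0\<^sub>m n n) = 0\<^sub>m n n"
proof -
  have "0 \<cdot>\<^sub>m 0\<^sub>m n n = (0\<^sub>m n n :: complex mat)" by (intro eq_matI) auto
  then have "\<Psi> (0\<^sub>m n n) = \<Psi> (0 \<cdot>\<^sub>m 0\<^sub>m n n)" by simp
  also have "\<dots> = 0 \<cdot>\<^sub>m \<Psi> (0\<^sub>m n n)" using L zero_carrier_mat unfolding linear_op_map_def by blast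
  also have "\<dots> = 0\<^sub>m n n" using linear_op_map_carrier[OF L zero_carrier_mat] by (intro eq_matI) auto
  finally show ?thesis .
qed

lemma linear_op_map_msum:
  assumes L: "linear_op_map n \<Psi>" and S: "finite S" and f: "\<And>s. s \<in> S \<Longrightarrow> f s \<in> carrier_mat n n"
  shows "\<Psi> (msum n f S) = msum n (\<lambda>s. \<Psi> (f s)) S"
  using S f
proof (induction S rule: finite_induct)
  case empty
  have "msum n g {} = 0\<^sub>m n n" for g :: "'a \<Rightarrow> complex mat" by (rule eq_matI) auto
  then show ?case using linear_op_map_zero[OF L] by simp
next
  case (insert x S)
  have msum_insert: "msum n g (insert x S) = g x + msum n g S" if "g x \<in> carrier_mat n n" for g
    by (rule eq_matI) (use insert that in auto)
  have fx: "f x \<in> carrier_mat n n" using insert by simp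
  have "\<Psi> (msum n f (insert x S)) = \<Psi> (f x) + \<Psi> (msum n f S)"
    using L fx by (simp add: msum_insert linear_op_map_def)
  also have "\<dots> = msum n (\<lambda>s. \<Psi> (f s)) (insert x S)"
    using insert linear_op_map_carrier[OF L fx] by (simp add: msum_insert)
  finally show ?case .
qed

lemma linear_op_map_udiag:
  assumes L: "linear_op_map n \<Psi>" and V: "V \<in> carrier_mat n n"
  shows "\<Psi> (udiag n V d) = msum n (\<lambda>j. complex_of_real (d j) \<cdot>\<^sub>m \<Psi> (outer n (col V j))) {..<n}"
  unfolding udiag_eq_msum_outer[OF V] using L
  by (subst linear_op_map_msum) (auto simp: linear_op_map_def msum_def)

text \<open>Jensen's inequality for the square and a resolution of the identity \<open>\<Sum>\<^sub>j Q\<^sub>j = 1\<close>: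
  with \<open>T = \<Sum>\<^sub>j f\<^sub>j Q\<^sub>j\<close> and \<open>y\<^sub>j = f\<^sub>j x - T x\<close>,
  \<open>\<langle>x, (\<Sum>\<^sub>j f\<^sub>j\<^sup>2 Q\<^sub>j - T\<^sup>2) x\<rangle> = \<Sum>\<^sub>j \<langle>y\<^sub>j, Q\<^sub>j y\<^sub>j\<rangle> \<ge> 0\<close>.\<close>

lemma psd_povm_square:
  fixes f :: "'a \<Rightarrow> real" and Q :: "'a \<Rightarrow> complex mat"
  assumes J: "finite J" and Q: "\<And>j. j \<in> J \<Longrightarrow> psd n (Q j)" and I: "msum n Q J = 1\<^sub>m n"
  defines "A \<equiv> msum n (\<lambda>j. complex_of_real (f j * f j) \<cdot>\<^sub>m Q j) J"
    and "T \<equiv> msum n (\<lambda>j. complex_of_real (f j) \<cdot>\<^sub>m Q j) J"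
  shows "psd n (A - T * T)"
  unfolding psd_iff
proof (intro conjI ballI)
  have Qc: "\<And>j. j \<in> J \<Longrightarrow> Q j \<in> carrier_mat n n" using Q psd_carrier by blast
  have hQ: "\<And>j. j \<in> J \<Longrightarrow> hermitian n (Q j)" using Q psd_hermitian by blast
  have Ac: "A \<in> carrier_mat n n" and Tc: "T \<in> carrier_mat n n" by (simp_all add: A_def T_def)
  show "hermitian n (A - T * T)"
    unfolding A_def T_def by (intro hermitian_minus hermitian_mult_self hermitian_msum_smult hQ)
  fix x :: "complex vec" assume x: "x \<in> carrier_vec n"
  define w where "w = T *\<^sub>v x"
  have w: "w \<in> carrier_vec n" using Tc x by (simp add: w_def)
  define y where "y j = complex_of_real (f j) \<cdot>\<^sub>v x - w" for j
  have y: "y j \<in> carrier_vec n" for j using x w by (simp add: y_def)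
  have yQy: "cinner (y j) (Q j *\<^sub>v y j)
      = complex_of_real (f j * f j) * cinner x (Q j *\<^sub>v x) - complex_of_real (f j) * cinner x (Q j *\<^sub>v w)
        - complex_of_real (f j) * cinner w (Q j *\<^sub>v x) + cinner w (Q j *\<^sub>v w)" if j: "j \<in> J" for j
  proof -
    have Qy: "Q j *\<^sub>v y j = complex_of_real (f j) \<cdot>\<^sub>v (Q j *\<^sub>v x) - Q j *\<^sub>v w"
      unfolding y_def using Qc[OF j] x w
      by (simp add: mult_minus_distrib_mat_vec[of _ n n] mult_mat_vec[of _ n n])
    have dims: "dim_vec (Q j *\<^sub>v x) = n" "dim_vec (Q j *\<^sub>v w) = n" "dim_vec x = n" "dim_vec w = n"
      using Qc[OF j] x w by auto
    show ?thesis
      unfolding Qy unfolding y_def using dims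
      by (simp add: cinner_minus_left cinner_minus_right cinner_smult_left cinner_smult_right algebra_simps)
  qed
  have "(\<Sum>j\<in>J. cinner (y j) (Q j *\<^sub>v y j))
      = cinner x (A *\<^sub>v x) - cinner x (T *\<^sub>v w) - cinner w (T *\<^sub>v x) + cinner w (1\<^sub>m n *\<^sub>v w)"
    unfolding A_def T_def I[symmetric] using x w Qc
    by (simp add: yQy cinner_msum_smult cinner_msum sum.distrib sum_subtractf)
  also have "\<dots> = cinner x ((A - T * T) *\<^sub>v x)"
    using Ac Tc x w by (simp add: w_def minus_mult_distrib_mat_vec[of _ n n] cinner_minus_right)
  finally have "cinner x ((A - T * T) *\<^sub>v x) = (\<Sum>j\<in>J. cinner (y j) (Q j *\<^sub>v y j))" by simp
  moreover have "0 \<le> (\<Sum>j\<in>J. Re (cinner (y j) (Q j *\<^sub>v y j)))"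
    by (intro sum_nonneg psd_cinner_nonneg[OF Q y])
  ultimately show "0 \<le> Re (cinner x ((A - T * T) *\<^sub>v x))" by simp
qed

text \<open>The images under \<open>\<Psi>\<close> of the spectral projections of \<open>X\<close> resolve the identity, so
  \<open>psd_povm_square\<close> applies.\<close>

lemma kadison_inequality:
  assumes L: "linear_op_map n \<Psi>" and pos: "\<And>Y. psd n Y \<Longrightarrow> psd n (\<Psi> Y)"
    and unital: "\<Psi> (1\<^sub>m n) = 1\<^sub>m n" and X: "hermitian n X"
  shows "psd n (\<Psi> (X * X) - \<Psi> X * \<Psi> X)"
proof -
  obtain V f where V: "unitary n V" and Xf: "X = udiag n V f"
    using hermitian_spectral[OF X] by blast
  have Vc: "V \<in> carrier_mat n n" using V by (rule unitary_carrier)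
  define Q where "Q j = \<Psi> (outer n (col V j))" for j
  have "col V j \<in> carrier_vec n" for j using Vc by (intro carrier_vecI) simp
  then have Q: "psd n (Q j)" for j unfolding Q_def by (intro pos psd_outer)
  have one: "complex_of_real 1 \<cdot>\<^sub>m Q j = Q j" for j using psd_carrier[OF Q] by (intro eq_matI) auto
  have "1\<^sub>m n = \<Psi> (udiag n V (\<lambda>_. 1))" using unital udiag_one[OF V] by simp
  also have "\<dots> = msum n Q {..<n}" unfolding linear_op_map_udiag[OF L Vc] Q_def[symmetric] one ..
  finally have I: "msum n Q {..<n} = 1\<^sub>m n" by simp
  have "\<Psi> (X * X) = msum n (\<lambda>j. complex_of_real (f j * f j) \<cdot>\<^sub>m Q j) {..<n}"
    unfolding Xf udiag_mult[OF V] linear_op_map_udiag[OF L Vc] Q_def ..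
  moreover have "\<Psi> X = msum n (\<lambda>j. complex_of_real (f j) \<cdot>\<^sub>m Q j) {..<n}"
    unfolding Xf linear_op_map_udiag[OF L Vc] Q_def ..
  ultimately show ?thesis using psd_povm_square[where J = "{..<n}" and Q = Q and f = f] Q I by simp
qed

lemma completely_positive_psd:
  assumes L: "linear_op_map n \<Phi>" and C: "completely_positive n \<Phi>" and X: "psd n X"
  shows "psd n (\<Phi> X)"
proof -
  have Xc: "X \<in> carrier_mat n n" using X by (rule psd_carrier)
  have "mat n n (($$) X) = X" using Xc by (intro eq_matI) auto
  then have "id_tensor 1 n \<Phi> X = \<Phi> X"
    unfolding id_tensor_def using linear_op_map_carrier[OF L Xc] by (intro eq_matI) auto
  moreover have "psd (1 * n) (id_tensor 1 n \<Phi> X)" using C X unfolding completely_positive_def by (metis mult_1)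
  ultimately show ?thesis by simp
qed

lemma trace_mult_psd_nonneg:
  assumes P: "psd n P" and Y: "psd n Y"
  shows "trace (P * Y) = complex_of_real (Re (trace (P * Y)))" "Re (trace (P * Y)) \<ge> 0"
proof -
  obtain V y where V: "unitary n V" and y: "\<And>k. k < n \<Longrightarrow> y k \<ge> 0" and Yd: "Y = udiag n V y"
    using psd_spectral[OF Y] by blast
  have Vc: "V \<in> carrier_mat n n" using V by (rule unitary_carrier)
  have "trace (P * Y) = (\<Sum>k<n. complex_of_real (y k) * cinner (col V k) (P *\<^sub>v col V k))"
    unfolding Yd by (rule trace_mult_udiag[OF psd_carrier[OF P] Vc])
  also have "\<dots> = complex_of_real (\<Sum>k<n. y k * Re (cinner (col V k) (P *\<^sub>v col V k)))"
    unfolding of_real_sum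
    by (intro sum.cong refl) (use hermitian_cinner_real[OF psd_hermitian[OF P]] Vc in auto)
  finally have tr: "trace (P * Y) = complex_of_real (\<Sum>k<n. y k * Re (cinner (col V k) (P *\<^sub>v col V k)))" .
  then show "trace (P * Y) = complex_of_real (Re (trace (P * Y)))" by simp
  show "Re (trace (P * Y)) \<ge> 0"
    unfolding tr using y psd_cinner_nonneg[OF P] Vc by (auto intro!: sum_nonneg mult_nonneg_nonneg)
qed

text \<open>Polarisation with \<open>e\<^sub>a + e\<^sub>b\<close> and \<open>e\<^sub>a + i e\<^sub>b\<close>.\<close>

lemma hermitian_if_cinner_real:
  assumes M: "M \<in> carrier_mat n n" and r: "\<And>x. x \<in> carrier_vec n \<Longrightarrow> Im (cinner x (M *\<^sub>v x)) = 0"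
  shows "hermitian n M"
proof (rule hermitianI[OF M])
  fix a b assume a: "a < n" and b: "b < n"
  have quad: "cinner (x + y) (M *\<^sub>v (x + y)) = cinner x (M *\<^sub>v x) + cinner x (M *\<^sub>v y) + cinner y (M *\<^sub>v x) + cinner y (M *\<^sub>v y)"
    if "x \<in> carrier_vec n" "y \<in> carrier_vec n" for x y
    using M that by (simp add: mult_add_distrib_mat_vec cinner_add_left cinner_add_right)
  have ite: "cnj (if P then 1 else 0) = (if P then 1 else 0)"
    "(if P then 1 else 0) * z = (if P then z else 0)" "z * (if P then 1 else 0) = (if P then z else 0)"
    for P and z :: complex by simp_all
  have entry: "cinner (unit_vec n i) (M *\<^sub>v unit_vec n j) = M $$ (i,j)" if "i < n" "j < n" for i j
    using M that by (simp add: cinner_def ite sum.delta)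
  let ?ea = "unit_vec n a :: complex vec" and ?eb = "unit_vec n b :: complex vec"
  have ea: "?ea \<in> carrier_vec n" and eb: "?eb \<in> carrier_vec n" and ieb: "\<i> \<cdot>\<^sub>v ?eb \<in> carrier_vec n" by auto
  have "Im (M $$ (a,b) + M $$ (b,a)) = 0"
    using r[of "?ea + ?eb"] r[OF ea] r[OF eb] quad[OF ea eb] entry a b by simp
  moreover have "Im (\<i> * M $$ (a,b) - \<i> * M $$ (b,a)) = 0"
  proof -
    have "cinner ?ea (M *\<^sub>v (\<i> \<cdot>\<^sub>v ?eb)) = \<i> * M $$ (a,b)"
      using M entry[OF a b] by (simp add: mult_mat_vec cinner_smult_right)
    moreover have "cinner (\<i> \<cdot>\<^sub>v ?eb) (M *\<^sub>v ?ea) = - \<i> * M $$ (b,a)"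
      using entry[OF b a] by (simp add: cinner_smult_left)
    ultimately show ?thesis
      using r[of "?ea + \<i> \<cdot>\<^sub>v ?eb"] r[OF ea] r[OF ieb] quad[OF ea ieb] by simp
  qed
  ultimately show "M $$ (a,b) = cnj (M $$ (b,a))" by (simp add: complex_eq_iff)
qed

lemma trace_dual_carrier: "is_trace_dual n \<Phi> \<Phi>' \<Longrightarrow> Y \<in> carrier_mat n n \<Longrightarrow> \<Phi>' Y \<in> carrier_mat n n"
  by (simp add: is_trace_dual_def)

lemma cinner_trace_dual:
  assumes D: "is_trace_dual n \<Phi> \<Phi>'" and Y: "Y \<in> carrier_mat n n" and x: "x \<in> carrier_vec n"
  shows "cinner x (\<Phi>' Y *\<^sub>v x) = trace (\<Phi> (outer n x) * Y)"
proof -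
  have PY: "\<Phi>' Y \<in> carrier_mat n n" using D Y by (rule trace_dual_carrier)
  have "cinner x (\<Phi>' Y *\<^sub>v x) = trace (\<Phi>' Y * outer n x)" using trace_mult_outer[OF PY x] by simp
  also have "\<dots> = trace (outer n x * \<Phi>' Y)" using PY by (intro trace_comm) auto
  also have "\<dots> = trace (\<Phi> (outer n x) * Y)" using D Y by (simp add: is_trace_dual_def)
  finally show ?thesis .
qed

lemma trace_dual_psd:
  assumes L: "linear_op_map n \<Phi>" and C: "completely_positive n \<Phi>" and D: "is_trace_dual n \<Phi> \<Phi>'"
    and Y: "psd n Y"
  shows "psd n (\<Phi>' Y)"
proof -
  have Yc: "Y \<in> carrier_mat n n" using Y by (rule psd_carrier)
  have qf: "cinner x (\<Phi>' Y *\<^sub>v x) = complex_of_real (Re (cinner x (\<Phi>' Y *\<^sub>v x)))"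
    "0 \<le> Re (cinner x (\<Phi>' Y *\<^sub>v x))" if x: "x \<in> carrier_vec n" for x
    unfolding cinner_trace_dual[OF D Yc x]
    using trace_mult_psd_nonneg[OF completely_positive_psd[OF L C psd_outer[OF x]] Y] by auto
  have "hermitian n (\<Phi>' Y)"
    by (rule hermitian_if_cinner_real[OF trace_dual_carrier[OF D Yc]]) (metis qf(1) Im_complex_of_real)
  then show ?thesis unfolding psd_iff using qf(2) by blast
qed

lemma trace_dual_linear:
  assumes L: "linear_op_map n \<Phi>" and D: "is_trace_dual n \<Phi> \<Phi>'"
  shows "linear_op_map n \<Phi>'"
proof -
  have c: "\<And>Y. Y \<in> carrier_mat n n \<Longrightarrow> \<Phi>' Y \<in> carrier_mat n n" using D by (rule trace_dual_carrier)
  have tr: "\<And>X Y. X \<in> carrier_mat n n \<Longrightarrow> Y \<in> carrier_mat n n \<Longrightarrow> trace (X * \<Phi>' Y) = trace (\<Phi> X * Y)"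
    using D by (simp add: is_trace_dual_def)
  have add: "\<Phi>' (Y1 + Y2) = \<Phi>' Y1 + \<Phi>' Y2"
    if Y1: "Y1 \<in> carrier_mat n n" and Y2: "Y2 \<in> carrier_mat n n" for Y1 Y2
  proof (rule eq_mat_if_trace_mult_eq)
    fix X :: "complex mat" assume X: "X \<in> carrier_mat n n"
    have PX: "\<Phi> X \<in> carrier_mat n n" using L X by (rule linear_op_map_carrier)
    show "trace (X * \<Phi>' (Y1 + Y2)) = trace (X * (\<Phi>' Y1 + \<Phi>' Y2))"
      using X Y1 Y2 PX c
      by (simp add: tr mult_add_distrib_mat[OF PX Y1 Y2] mult_add_distrib_mat[OF X c[OF Y1] c[OF Y2]] trace_add[of _ n])
  qed (use c Y1 Y2 in auto)
  have smult: "\<Phi>' (a \<cdot>\<^sub>m Y) = a \<cdot>\<^sub>m \<Phi>' Y" if Y: "Y \<in> carrier_mat n n" for Y a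
  proof (rule eq_mat_if_trace_mult_eq)
    fix X :: "complex mat" assume X: "X \<in> carrier_mat n n"
    have PX: "\<Phi> X \<in> carrier_mat n n" using L X by (rule linear_op_map_carrier)
    show "trace (X * \<Phi>' (a \<cdot>\<^sub>m Y)) = trace (X * (a \<cdot>\<^sub>m \<Phi>' Y))"
      using X Y PX c by (simp add: tr mult_smult_distrib[OF PX Y] mult_smult_distrib[OF X c[OF Y]] trace_smult[of _ n])
  qed (use c Y in auto)
  show ?thesis unfolding linear_op_map_def using c add smult by blast
qed

lemma trace_dual_unital:
  assumes L: "linear_op_map n \<Phi>" and T: "trace_preserving n \<Phi>" and D: "is_trace_dual n \<Phi> \<Phi>'"
  shows "\<Phi>' (1\<^sub>m n) = 1\<^sub>m n"
proof (rule eq_mat_if_trace_mult_eq)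
  fix X :: "complex mat" assume X: "X \<in> carrier_mat n n"
  have "trace (X * \<Phi>' (1\<^sub>m n)) = trace (\<Phi> X * 1\<^sub>m n)" using D X by (simp add: is_trace_dual_def)
  also have "\<dots> = trace X" using T X linear_op_map_carrier[OF L X] by (simp add: trace_preserving_def)
  finally show "trace (X * \<Phi>' (1\<^sub>m n)) = trace (X * 1\<^sub>m n)" using X by simp
qed (use D in \<open>auto simp: is_trace_dual_def\<close>)

section \<open>Gibbs states\<close>

lemma exp_of_real_sums: "(\<lambda>m. complex_of_real t ^ m / of_nat (fact m)) sums complex_of_real (exp t)"
proof -
  have "(\<lambda>m. complex_of_real t ^ m /\<^sub>R fact m) sums exp (complex_of_real t)"
    by (rule exp_converges)
  then show ?thesis by (simp add: scaleR_conv_of_real divide_inverse mult.commute exp_of_real)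
qed

lemma mat_exp_udiag:
  assumes U: "unitary n U"
  shows "mat_exp (udiag n U d) = udiag n U (\<lambda>k. exp (d k))"
proof (rule eq_matI)
  fix a b assume "a < dim_row (udiag n U (\<lambda>k. exp (d k)))" "b < dim_col (udiag n U (\<lambda>k. exp (d k)))"
  then have a: "a < n" and b: "b < n" by auto
  have "(\<lambda>m. \<Sum>k<n. U $$ (a,k) * cnj (U $$ (b,k)) * (complex_of_real (d k) ^ m / of_nat (fact m)))
      sums (\<Sum>k<n. U $$ (a,k) * cnj (U $$ (b,k)) * complex_of_real (exp (d k)))"
    by (intro sums_sum sums_mult exp_of_real_sums)
  moreover have "(udiag n U d ^\<^sub>m m) $$ (a,b) / of_nat (fact m)
      = (\<Sum>k<n. U $$ (a,k) * cnj (U $$ (b,k)) * (complex_of_real (d k) ^ m / of_nat (fact m)))" for m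
    using a b by (simp add: udiag_power[OF U] sum_divide_distrib algebra_simps)
  ultimately show "mat_exp (udiag n U d) $$ (a,b) = udiag n U (\<lambda>k. exp (d k)) $$ (a,b)"
    using a b by (simp add: mat_exp_def sums_iff algebra_simps)
qed (auto simp: mat_exp_def)

text \<open>Since \<open>\<beta> F = - ln Z\<close> with \<open>Z = \<Sum>\<^sub>k exp (-\<beta> h\<^sub>k)\<close>, the eigenvalues of the Gibbs state
  are the Boltzmann weights \<open>exp (-\<beta> h\<^sub>k) / Z\<close>.\<close>

lemma gibbs_udiag:
  fixes h :: "nat \<Rightarrow> real"
  assumes U: "unitary n U" and n: "n > 0" and \<beta>: "\<beta> \<noteq> 0"
  defines "F \<equiv> free_energy n \<beta> (udiag n U h)"
  shows "gibbs n \<beta> (udiag n U h) = udiag n U (\<lambda>k. exp (\<beta> * (F - h k)))"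
    and "(\<Sum>k<n. exp (\<beta> * (F - h k))) = 1"
proof -
  have "complex_of_real \<beta> \<cdot>\<^sub>m (complex_of_real F \<cdot>\<^sub>m 1\<^sub>m n - udiag n U h) = udiag n U (\<lambda>k. \<beta> * (F - h k))"
    unfolding udiag_one[OF U, symmetric] udiag_smult udiag_minus by simp
  then show "gibbs n \<beta> (udiag n U h) = udiag n U (\<lambda>k. exp (\<beta> * (F - h k)))"
    unfolding gibbs_def F_def[symmetric] by (simp add: mat_exp_udiag[OF U])
  define Z where "Z = (\<Sum>k<n. exp (- \<beta> * h k))"
  have Z: "Z > 0" unfolding Z_def by (rule sum_pos) (use n in auto)
  have "mat_exp (complex_of_real (- \<beta>) \<cdot>\<^sub>m udiag n U h) = udiag n U (\<lambda>k. exp (- \<beta> * h k))"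
    by (simp only: udiag_smult mat_exp_udiag[OF U])
  then have "\<beta> * F = - ln Z"
    using \<beta> by (simp add: F_def free_energy_def trace_udiag[OF U] Z_def flip: of_real_sum)
  then have "exp (\<beta> * (F - h k)) = exp (- \<beta> * h k) / Z" for k
    using Z by (simp add: right_diff_distrib exp_diff exp_minus field_simps)
  then show "(\<Sum>k<n. exp (\<beta> * (F - h k))) = 1"
    using Z by (simp add: sum_divide_distrib[symmetric] Z_def)
qed

section \<open>Real inequalities\<close>

lemma convex_comb_pos:
  fixes q r :: "'a \<Rightarrow> real"
  assumes "\<And>j. j \<in> J \<Longrightarrow> q j > 0" "\<And>j. j \<in> J \<Longrightarrow> r j \<ge> 0" "(\<Sum>j\<in>J. r j) = 1"
  shows "(\<Sum>j\<in>J. q j * r j) > 0"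
proof -
  have "\<exists>j\<in>J. r j > 0"
  proof (rule ccontr)
    assume "\<not> (\<exists>j\<in>J. r j > 0)"
    then have "\<And>j. j \<in> J \<Longrightarrow> r j = 0" using assms(2) by (simp add: order.antisym not_less)
    then show False using assms(3) by simp
  qed
  then obtain j0 where "j0 \<in> J" "r j0 > 0" by blast
  moreover have "finite J"
  proof (rule ccontr)
    assume "infinite J"
    then show False using assms(3) by simp
  qed
  ultimately show ?thesis
    using assms(1,2) by (intro sum_pos2[of J j0]) (auto intro: mult_nonneg_nonneg less_imp_le)
qed

text \<open>From \<open>ln x \<le> x - 1\<close> at \<open>x = r\<^sub>k / \<Sum>\<^sub>j w\<^sub>j r\<^sub>j\<close>.\<close>

lemma jensen_ln:
  fixes w r :: "'a \<Rightarrow> real"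
  assumes w: "\<And>k. k \<in> I \<Longrightarrow> w k \<ge> 0" and w1: "(\<Sum>k\<in>I. w k) = 1"
    and r: "\<And>k. k \<in> I \<Longrightarrow> r k > 0"
  shows "(\<Sum>k\<in>I. w k * ln (r k)) \<le> ln (\<Sum>k\<in>I. w k * r k)"
proof -
  define m where "m = (\<Sum>k\<in>I. w k * r k)"
  have m: "m > 0" unfolding m_def using convex_comb_pos[of I r w] r w w1 by (simp add: mult.commute)
  have "(\<Sum>k\<in>I. w k * ln (r k / m)) = (\<Sum>k\<in>I. w k * ln (r k) - w k * ln m)"
  proof (rule sum.cong[OF refl])
    fix k assume "k \<in> I"
    then show "w k * ln (r k / m) = w k * ln (r k) - w k * ln m"
      using r[of k] m by (simp add: ln_div right_diff_distrib)
  qed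
  also have "\<dots> = (\<Sum>k\<in>I. w k * ln (r k)) - (\<Sum>k\<in>I. w k) * ln m"
    by (simp add: sum_subtractf sum_distrib_right)
  finally have "(\<Sum>k\<in>I. w k * ln (r k)) - ln m = (\<Sum>k\<in>I. w k * ln (r k / m))"
    using w1 by simp
  also have "\<dots> \<le> (\<Sum>k\<in>I. w k * (r k / m - 1))"
    using r m w by (intro sum_mono mult_left_mono ln_le_minus_one) auto
  also have "\<dots> = (\<Sum>k\<in>I. w k * r k) / m - (\<Sum>k\<in>I. w k)"
    by (simp add: right_diff_distrib sum_subtractf sum_divide_distrib)
  also have "\<dots> = 0" using m w1 by (simp add: m_def)
  finally show ?thesis by (simp add: m_def)
qed

text \<open>The left-hand side is \<open>-2 ln\<close> of the Bhattacharyya coefficient, the right-hand side the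
  relative entropy, of the joint distributions \<open>p\<^sub>i a\<^sub>i\<^sub>j\<close> and \<open>q\<^sub>j a\<^sub>i\<^sub>j\<close>.
  Jensen with weights \<open>p\<^sub>i a\<^sub>i\<^sub>j\<close> applied to \<open>\<surd>(q\<^sub>j / p\<^sub>i)\<close>.\<close>

lemma relative_entropy_ge_bhattacharyya:
  fixes p q :: "nat \<Rightarrow> real" and a :: "nat \<Rightarrow> nat \<Rightarrow> real"
  assumes p: "\<And>i. i < n \<Longrightarrow> p i > 0" and q: "\<And>j. j < n \<Longrightarrow> q j > 0"
    and a: "\<And>i j. i < n \<Longrightarrow> j < n \<Longrightarrow> a i j \<ge> 0"
    and s: "(\<Sum>i<n. \<Sum>j<n. p i * a i j) = 1"
  shows "- 2 * ln (\<Sum>i<n. sqrt (p i) * (\<Sum>j<n. sqrt (q j) * a i j))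
    \<le> (\<Sum>i<n. \<Sum>j<n. p i * a i j * (ln (p i) - ln (q j)))"
proof -
  let ?I = "{..<n} \<times> {..<n}"
  define w where "w = (\<lambda>(i,j). p i * a i j)"
  define r where "r = (\<lambda>(i,j). sqrt (q j) / sqrt (p i))"
  have pairs: "(\<Sum>k\<in>?I. f k) = (\<Sum>i<n. \<Sum>j<n. f (i,j))" for f :: "nat \<times> nat \<Rightarrow> real"
    by (simp add: sum.cartesian_product)
  have "(\<Sum>k\<in>?I. w k * ln (r k)) \<le> ln (\<Sum>k\<in>?I. w k * r k)"
  proof (rule jensen_ln)
    fix k assume "k \<in> ?I"
    then obtain i j where k: "k = (i,j)" "i < n" "j < n" by auto
    show "w k \<ge> 0" using p[OF k(2)] a[OF k(2,3)] by (simp add: k w_def)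
    show "r k > 0" using p[OF k(2)] q[OF k(3)] by (simp add: k r_def)
  qed (use s in \<open>simp add: w_def pairs\<close>)
  moreover have "w (i,j) * ln (r (i,j)) = - (p i * a i j * (ln (p i) - ln (q j)) / 2)" if "i < n" "j < n" for i j
    using p[OF that(1)] q[OF that(2)] by (simp add: w_def r_def ln_div ln_sqrt field_simps)
  moreover have "w (i,j) * r (i,j) = sqrt (p i) * (sqrt (q j) * a i j)" if "i < n" for i j
    using p[OF that] by (simp add: w_def r_def field_simps real_div_sqrt)
  ultimately have "(\<Sum>i<n. \<Sum>j<n. - (p i * a i j * (ln (p i) - ln (q j)) / 2))
      \<le> ln (\<Sum>i<n. sqrt (p i) * (\<Sum>j<n. sqrt (q j) * a i j))"
    by (simp add: pairs sum_distrib_left)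
  moreover have "(\<Sum>i<n. \<Sum>j<n. - (p i * a i j * (ln (p i) - ln (q j)) / 2))
      = - (\<Sum>i<n. \<Sum>j<n. p i * a i j * (ln (p i) - ln (q j))) / 2"
    by (simp add: sum_negf sum_divide_distrib)
  ultimately show ?thesis by linarith
qed

lemma x_cos_le_sin:
  assumes x: "0 \<le> x" "x \<le> pi / 2"
  shows "x * cos x \<le> sin x"
proof -
  let ?k = "\<lambda>t. sin t - t * cos t"
  have "?k 0 \<le> ?k x"
  proof (rule DERIV_nonneg_imp_nondecreasing[OF x(1)])
    fix t assume t: "0 \<le> t" "t \<le> x"
    have "DERIV ?k t :> (cos t - (1 * cos t + t * (- sin t)))"
      by (intro derivative_eq_intros) auto
    moreover have "0 \<le> cos t - (1 * cos t + t * (- sin t))"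
      using t x by (simp add: sin_ge_zero)
    ultimately show "\<exists>y. DERIV ?k t :> y \<and> 0 \<le> y" by blast
  qed
  then show ?thesis by simp
qed

lemma ln_cos_le:
  assumes x: "0 \<le> x" "x < pi / 2"
  shows "ln (cos x) \<le> - (x\<^sup>2 / 2)"
proof -
  let ?g = "\<lambda>t. ln (cos t) + t\<^sup>2 / 2"
  have "?g x \<le> ?g 0"
  proof (rule DERIV_nonpos_imp_nonincreasing[OF x(1)])
    fix t assume t: "0 \<le> t" "t \<le> x"
    have c: "cos t > 0" using t x by (intro cos_gt_zero_pi) auto
    have "DERIV ?g t :> (- sin t / cos t + t)"
      using c by (auto intro!: derivative_eq_intros simp: power2_eq_square field_simps)
    moreover have "- sin t / cos t + t \<le> 0"
      using x_cos_le_sin[of t] t x c by (simp add: field_simps)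
    ultimately show "\<exists>y. DERIV ?g t :> y \<and> y \<le> 0" by blast
  qed
  then show ?thesis by simp
qed

lemma arccos_sq_le_neg_two_ln:
  assumes F: "0 < F" "F \<le> 1"
  shows "8 / pi\<^sup>2 * (arccos F)\<^sup>2 \<le> - 2 * ln F"
proof -
  define L where "L = arccos F"
  have L0: "0 \<le> L" unfolding L_def using F by (intro arccos_lbound) auto
  have "arccos F < arccos 0" using F by (intro arccos_less_arccos) auto
  then have L1: "L < pi / 2" by (simp add: L_def)
  have "ln F \<le> - (L\<^sup>2 / 2)" using ln_cos_le[OF L0 L1] F by (simp add: L_def)
  moreover have "8 \<le> pi\<^sup>2"
  proof -
    have "sqrt 2 / 2 \<le> pi / 4" using sin_x_le_x[of "pi / 4"] by (simp add: sin_45)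
    then have "(2 * sqrt 2)\<^sup>2 \<le> pi\<^sup>2" by (intro power_mono) auto
    then show ?thesis by (simp add: power_mult_distrib)
  qed
  then have "8 / pi\<^sup>2 * L\<^sup>2 \<le> 1 * L\<^sup>2" by (intro mult_right_mono) auto
  ultimately show ?thesis by (simp add: L_def)
qed

lemma dissipation_eq_log_ratio:
  fixes p q h g :: "nat \<Rightarrow> real" and a :: "nat \<Rightarrow> nat \<Rightarrow> real"
  assumes p1: "(\<Sum>i<n. p i) = 1" and a1: "\<And>i. i < n \<Longrightarrow> (\<Sum>j<n. a i j) = 1"
    and lnp: "\<And>i. ln (p i) = \<beta> * (F0 - h i)" and lnq: "\<And>j. ln (q j) = \<beta> * (F1 - g j)"
  shows "\<beta> * ((\<Sum>i<n. p i * (\<Sum>j<n. g j * a i j)) - (\<Sum>i<n. p i * h i) - (F1 - F0))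
    = (\<Sum>i<n. \<Sum>j<n. p i * a i j * (ln (p i) - ln (q j)))"
proof -
  have row: "(\<Sum>j<n. p i * a i j * (ln (p i) - ln (q j)))
      = \<beta> * (p i * (\<Sum>j<n. g j * a i j)) - \<beta> * (p i * h i) - \<beta> * (F1 - F0) * p i" if "i < n" for i
  proof -
    have "(\<Sum>j<n. p i * a i j * (ln (p i) - ln (q j)))
        = (\<Sum>j<n. p i * (\<beta> * (F0 - h i - F1)) * a i j + \<beta> * p i * (g j * a i j))"
      unfolding lnp lnq by (intro sum.cong refl) (simp add: algebra_simps)
    also have "\<dots> = p i * (\<beta> * (F0 - h i - F1)) * (\<Sum>j<n. a i j) + \<beta> * p i * (\<Sum>j<n. g j * a i j)"
      by (simp add: sum.distrib sum_distrib_left)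
    finally have "(\<Sum>j<n. p i * a i j * (ln (p i) - ln (q j)))
        = p i * (\<beta> * (F0 - h i - F1)) * (\<Sum>j<n. a i j) + \<beta> * p i * (\<Sum>j<n. g j * a i j)" .
    then show ?thesis using a1[OF that] by (simp add: algebra_simps)
  qed
  have "(\<Sum>i<n. \<Sum>j<n. p i * a i j * (ln (p i) - ln (q j)))
      = \<beta> * (\<Sum>i<n. p i * (\<Sum>j<n. g j * a i j)) - \<beta> * (\<Sum>i<n. p i * h i) - \<beta> * (F1 - F0) * (\<Sum>i<n. p i)"
    by (simp add: row sum_subtractf sum_distrib_left)
  then show ?thesis using p1 by (simp add: algebra_simps)
qed

lemma overlap_arccos_bound:
  assumes \<tau>: "\<tau> > 0" and z: "z > 0" and F: "F \<le> 1" and lb: "\<tau> / sqrt z \<le> F"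
  shows "8 / pi\<^sup>2 * (arccos F)\<^sup>2 - ln z \<le> - 2 * ln \<tau>"
proof -
  have F0: "F > 0" using \<tau> z lb by (smt (verit) divide_pos_pos real_sqrt_gt_zero)
  have "\<tau> \<le> sqrt z * F" using lb z by (simp add: field_simps)
  then have "ln \<tau> \<le> ln z / 2 + ln F" using \<tau> z F0 by (simp add: ln_mult ln_sqrt flip: ln_le_cancel_iff)
  then show ?thesis using arccos_sq_le_neg_two_ln[OF F0 F] by simp
qed

section \<open>Transition probabilities of a channel between two eigenbases\<close>

locale channel_bases =
  fixes n :: nat and \<Phi> \<Phi>' :: "complex mat \<Rightarrow> complex mat" and U V :: "complex mat"
  assumes cptp: "CPTP n \<Phi>" and dual: "is_trace_dual n \<Phi> \<Phi>'"
    and U: "unitary n U" and V: "unitary n V"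
begin

lemma linear: "linear_op_map n \<Phi>" and cp: "completely_positive n \<Phi>" and tp: "trace_preserving n \<Phi>"
  using cptp by (auto simp: CPTP_def)

lemma dual_linear: "linear_op_map n \<Phi>'"
  by (rule trace_dual_linear[OF linear dual])

lemma dual_psd: "psd n Y \<Longrightarrow> psd n (\<Phi>' Y)"
  by (rule trace_dual_psd[OF linear cp dual])

lemma U_carrier: "U \<in> carrier_mat n n" and V_carrier: "V \<in> carrier_mat n n"
  using U V by (auto simp: unitary_def)

lemma col_U: "col U i \<in> carrier_vec n" and col_V: "col V j \<in> carrier_vec n"
  using U_carrier V_carrier by (auto intro: carrier_vecI)

lemma psd_channel_outer: "psd n (\<Phi> (outer n (col U i)))"
  by (rule completely_positive_psd[OF linear cp psd_outer[OF col_U]])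

definition transition :: "nat \<Rightarrow> nat \<Rightarrow> real" where
  "transition i j = Re (cinner (col V j) (\<Phi> (outer n (col U i)) *\<^sub>v col V j))"

lemma transition_nonneg: "transition i j \<ge> 0"
  unfolding transition_def by (rule psd_cinner_nonneg[OF psd_channel_outer col_V])

lemma cinner_channel_outer: "cinner (col V j) (\<Phi> (outer n (col U i)) *\<^sub>v col V j) = complex_of_real (transition i j)"
  unfolding transition_def by (rule hermitian_cinner_real[OF psd_hermitian[OF psd_channel_outer] col_V])

lemma transition_row_sum:
  assumes i: "i < n"
  shows "(\<Sum>j<n. transition i j) = 1"
proof -
  have "complex_of_real (\<Sum>j<n. transition i j) = trace (\<Phi> (outer n (col U i)))"
    by (simp add: trace_eq_sum_cinner_cols[OF V psd_carrier[OF psd_channel_outer]] cinner_channel_outer)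
  also have "\<dots> = trace (1\<^sub>m n * outer n (col U i))"
    using tp left_mult_one_mat[OF outer_carrier] by (simp add: trace_preserving_def)
  also have "\<dots> = 1"
    by (simp add: trace_mult_outer[OF _ col_U] one_mult_mat_vec[OF col_U] cinner_unitary_cols[OF U i i])
  finally show ?thesis by (simp only: of_real_eq_1_iff)
qed

lemma cinner_dual_udiag:
  "cinner (col U i) (\<Phi>' (udiag n V f) *\<^sub>v col U i) = complex_of_real (\<Sum>j<n. f j * transition i j)"
  by (simp add: cinner_trace_dual[OF dual udiag_carrier col_U] trace_mult_udiag[OF _ V_carrier]
      psd_carrier[OF psd_channel_outer] cinner_channel_outer)

lemma trace_dual_udiag:
  "trace (\<Phi>' (udiag n V f)) = complex_of_real (\<Sum>i<n. \<Sum>j<n. f j * transition i j)"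
  by (simp add: trace_eq_sum_cinner_cols[OF U trace_dual_carrier[OF dual udiag_carrier]] cinner_dual_udiag)

lemma trace_channel_udiag:
  "trace (\<Phi> (udiag n U p) * udiag n V g) = complex_of_real (\<Sum>i<n. p i * (\<Sum>j<n. g j * transition i j))"
proof -
  have Yc: "\<Phi>' (udiag n V g) \<in> carrier_mat n n" by (rule trace_dual_carrier[OF dual udiag_carrier])
  have "trace (\<Phi> (udiag n U p) * udiag n V g) = trace (\<Phi>' (udiag n V g) * udiag n U p)"
    using dual Yc by (simp add: is_trace_dual_def trace_comm[of _ n])
  also have "\<dots> = complex_of_real (\<Sum>i<n. p i * (\<Sum>j<n. g j * transition i j))"
    by (simp add: trace_mult_udiag[OF Yc U_carrier] cinner_dual_udiag)
  finally show ?thesis .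
qed

text \<open>Kadison's inequality for the unital positive map \<open>\<Phi>'\<close> and operator monotonicity of the
  square root give \<open>\<surd>\<Phi>'(\<Gamma>) \<ge> \<Phi>'(\<surd>\<Gamma>)\<close> for \<open>\<Gamma> = udiag n V q\<close>; the right-hand side has the
  diagonal entries \<open>\<Sum>\<^sub>j \<surd>q\<^sub>j a\<^sub>i\<^sub>j\<close> in the basis \<open>U\<close>.\<close>

lemma cinner_sqrt_dual_ge:
  assumes q: "\<And>k. k < n \<Longrightarrow> q k \<ge> 0"
  shows "(\<Sum>j<n. sqrt (q j) * transition i j) \<le> Re (cinner (col U i) (psd_sqrt (\<Phi>' (udiag n V q)) *\<^sub>v col U i))"
proof -
  define A where "A = \<Phi>' (udiag n V q)"
  define T where "T = \<Phi>' (udiag n V (\<lambda>k. sqrt (q k)))"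
  have A: "psd n A" and T: "psd n T"
    unfolding A_def T_def using q by (auto intro!: dual_psd psd_udiag[OF V_carrier])
  have SA: "psd n (psd_sqrt A)" "psd_sqrt A * psd_sqrt A = A"
    using psd_sqrt_psd[OF A] psd_sqrt_mult_self[OF A] by auto
  have sq: "udiag n V (\<lambda>k. sqrt (q k)) * udiag n V (\<lambda>k. sqrt (q k)) = udiag n V q"
    unfolding udiag_mult[OF V] using q by (intro udiag_cong) simp
  have "psd n (\<Phi>' (udiag n V (\<lambda>k. sqrt (q k)) * udiag n V (\<lambda>k. sqrt (q k))) - T * T)"
    unfolding T_def
    by (rule kadison_inequality[OF dual_linear _ trace_dual_unital[OF linear tp dual] hermitian_udiag])
      (rule dual_psd)
  then have "psd n (A - T * T)" unfolding sq A_def .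
  then have "psd n (psd_sqrt A - T)" by (intro psd_square_le_imp_le[OF T SA(1)]) (simp add: SA(2))
  from psd_cinner_nonneg[OF this col_U[of i]]
  have "Re (cinner (col U i) (T *\<^sub>v col U i)) \<le> Re (cinner (col U i) (psd_sqrt A *\<^sub>v col U i))"
    using psd_carrier[OF SA(1)] psd_carrier[OF T] col_U[of i] U_carrier
    by (simp add: minus_mult_distrib_mat_vec[of _ n n] cinner_minus_right)
  then show ?thesis by (simp add: A_def T_def cinner_dual_udiag)
qed

lemma fidelity_dual_ge:
  assumes p: "\<And>k. k < n \<Longrightarrow> p k \<ge> 0" and q: "\<And>k. k < n \<Longrightarrow> q k \<ge> 0"
    and Z: "trace (\<Phi>' (udiag n V q)) = complex_of_real z" and z: "z > 0"
  shows "(\<Sum>i<n. sqrt (p i) * (\<Sum>j<n. sqrt (q j) * transition i j)) / sqrt z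
    \<le> fidelity (udiag n U p) ((1 / trace (\<Phi>' (udiag n V q))) \<cdot>\<^sub>m \<Phi>' (udiag n V q))"
proof -
  define A where "A = \<Phi>' (udiag n V q)"
  have A: "psd n A" unfolding A_def using q by (auto intro!: dual_psd psd_udiag[OF V_carrier])
  define P where "P = udiag n U (\<lambda>k. sqrt (p k))"
  have P: "psd_sqrt (udiag n U p) = P" unfolding P_def using psd_sqrt_udiag[OF U, of p] p by simp
  have SA: "psd_sqrt A \<in> carrier_mat n n" using psd_carrier[OF psd_sqrt_psd[OF A]] .
  have "(\<Sum>i<n. sqrt (p i) * (\<Sum>j<n. sqrt (q j) * transition i j))
      \<le> (\<Sum>i<n. sqrt (p i) * Re (cinner (col U i) (psd_sqrt A *\<^sub>v col U i)))"
    unfolding A_def by (intro sum_mono mult_left_mono cinner_sqrt_dual_ge q) (use p in auto)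
  also have "\<dots> = Re (trace (psd_sqrt A * P))" by (simp add: P_def trace_mult_udiag[OF SA U_carrier])
  also have "\<dots> = Re (trace (P * psd_sqrt A))" using SA by (simp add: P_def trace_comm[of _ n])
  also have "\<dots> \<le> trace_norm (P * psd_sqrt A)" using SA by (intro re_trace_le_trace_norm[of _ n]) (simp add: P_def)
  also have "\<dots> = sqrt z * fidelity (udiag n U p) (complex_of_real (1 / z) \<cdot>\<^sub>m A)"
    using z SA psd_sqrt_smult[OF A, of "1 / z"] trace_norm_smult[of "P * psd_sqrt A" n "sqrt (1 / z)"]
    by (simp add: fidelity_def P mult_smult_distrib[of _ n n] P_def real_sqrt_divide)
  finally show ?thesis using z Z by (simp add: A_def field_simps)
qed

lemma dissipation_ge_bhattacharyya:
  assumes p: "\<And>k. p k > 0" and q: "\<And>k. q k > 0" and p1: "(\<Sum>k<n. p k) = 1"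
    and lnp: "\<And>i. ln (p i) = \<beta> * (F0 - h i)" and lnq: "\<And>j. ln (q j) = \<beta> * (F1 - g j)"
  shows "- 2 * ln (\<Sum>i<n. sqrt (p i) * (\<Sum>j<n. sqrt (q j) * transition i j))
    \<le> \<beta> * ((Re (trace (\<Phi> (udiag n U p) * udiag n V g)) - Re (trace (udiag n U p * udiag n U h))) - (F1 - F0))"
proof -
  have "(\<Sum>i<n. \<Sum>j<n. p i * transition i j) = 1"
    using p1 transition_row_sum by (simp flip: sum_distrib_left)
  then have "- 2 * ln (\<Sum>i<n. sqrt (p i) * (\<Sum>j<n. sqrt (q j) * transition i j))
      \<le> (\<Sum>i<n. \<Sum>j<n. p i * transition i j * (ln (p i) - ln (q j)))"
    using p q transition_nonneg by (intro relative_entropy_ge_bhattacharyya)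
  also have "\<dots> = \<beta> * ((\<Sum>i<n. p i * (\<Sum>j<n. g j * transition i j)) - (\<Sum>i<n. p i * h i) - (F1 - F0))"
    using p1 transition_row_sum lnp lnq by (intro dissipation_eq_log_ratio[symmetric])
  also have "(\<Sum>i<n. p i * h i) = Re (trace (udiag n U p * udiag n U h))"
    by (simp add: udiag_mult[OF U] trace_udiag[OF U] flip: of_real_sum)
  finally show ?thesis by (simp add: trace_channel_udiag)
qed

lemma bures_dissipation_bound:
  assumes n: "n > 0" and p: "\<And>k. p k > 0" and q: "\<And>k. q k > 0" and p1: "(\<Sum>k<n. p k) = 1"
    and lnp: "\<And>i. ln (p i) = \<beta> * (F0 - h i)" and lnq: "\<And>j. ln (q j) = \<beta> * (F1 - g j)"
  defines "Z \<equiv> trace (\<Phi>' (udiag n V q))"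
  shows "8 / pi\<^sup>2 * (bures_angle (udiag n U p) ((1 / Z) \<cdot>\<^sub>m \<Phi>' (udiag n V q)))\<^sup>2 - ln (Re Z)
    \<le> \<beta> * ((Re (trace (\<Phi> (udiag n U p) * udiag n V g)) - Re (trace (udiag n U p * udiag n U h))) - (F1 - F0))"
proof -
  define \<tau> where "\<tau> = (\<Sum>i<n. sqrt (p i) * (\<Sum>j<n. sqrt (q j) * transition i j))"
  define z where "z = (\<Sum>i<n. \<Sum>j<n. q j * transition i j)"
  define \<gamma> where "\<gamma> = (1 / Z) \<cdot>\<^sub>m \<Phi>' (udiag n V q)"
  have Z: "Z = complex_of_real z" by (simp add: Z_def z_def trace_dual_udiag)
  have row: "(\<Sum>j<n. f j * transition i j) > 0" if "\<And>j. f j > 0" "i < n" for f i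
    using that transition_nonneg transition_row_sum by (intro convex_comb_pos) auto
  have \<tau>: "\<tau> > 0" unfolding \<tau>_def using n p q row[of "\<lambda>j. sqrt (q j)"] by (intro sum_pos) auto
  have z: "z > 0" unfolding z_def by (rule sum_pos) (use n q row[of q] in auto)
  have "\<tau> / sqrt z \<le> fidelity (udiag n U p) \<gamma>"
    unfolding \<tau>_def \<gamma>_def Z_def using p q Z z by (intro fidelity_dual_ge less_imp_le) (auto simp: Z_def)
  moreover have "fidelity (udiag n U p) \<gamma> \<le> 1"
  proof (rule fidelity_le_one)
    show "psd n (udiag n U p)" using p by (intro psd_udiag[OF U_carrier] less_imp_le)
    have "\<gamma> = complex_of_real (1 / z) \<cdot>\<^sub>m \<Phi>' (udiag n V q)" by (simp add: \<gamma>_def Z)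
    then show "psd n \<gamma>"
      using q z by (simp only:) (intro psd_smult dual_psd psd_udiag[OF V_carrier] less_imp_le, auto)
    show "trace (udiag n U p) = 1" using p1 by (simp add: trace_udiag[OF U] flip: of_real_sum)
    show "trace \<gamma> = 1"
      unfolding \<gamma>_def using z Z by (simp add: Z_def trace_smult[OF trace_dual_carrier[OF dual udiag_carrier]])
  qed
  moreover have "- 2 * ln \<tau>
      \<le> \<beta> * ((Re (trace (\<Phi> (udiag n U p) * udiag n V g)) - Re (trace (udiag n U p * udiag n U h))) - (F1 - F0))"
    unfolding \<tau>_def by (rule dissipation_ge_bhattacharyya) (fact p q p1 lnp lnq)+
  ultimately show ?thesis
    using overlap_arccos_bound[OF \<tau> z] Z by (fastforce simp: bures_angle_def \<gamma>_def)
qed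

end

theorem mainTheorem2:
  fixes n :: nat and \<beta> :: real
    and \<Phi> \<Phi>' :: "complex mat \<Rightarrow> complex mat"
    and H0 H\<tau> :: "complex mat"
  assumes "n > 0"
    and "CPTP n \<Phi>"
    and "is_trace_dual n \<Phi> \<Phi>'"
    and "hermitian n H0" and "hermitian n H\<tau>"
    and "\<beta> > 0"
  shows "let \<Gamma>0 = gibbs n \<beta> H0; \<Gamma>\<tau> = gibbs n \<beta> H\<tau>;
             \<Delta>F = free_energy n \<beta> H\<tau> - free_energy n \<beta> H0;
             \<Delta>E = Re (trace (\<Phi> \<Gamma>0 * H\<tau>)) - Re (trace (\<Gamma>0 * H0));
             Z = trace (\<Phi>' \<Gamma>\<tau>);
             \<gamma> = (1 / Z) \<cdot>\<^sub>m \<Phi>' \<Gamma>\<tau>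
         in \<beta> * (\<Delta>E - \<Delta>F) \<ge> 8 / pi\<^sup>2 * (bures_angle \<Gamma>0 \<gamma>)\<^sup>2 - ln (Re Z)"
proof -
  obtain U h where U: "unitary n U" and H0: "H0 = udiag n U h"
    using hermitian_spectral[OF assms(4)] by blast
  obtain V g where V: "unitary n V" and H\<tau>: "H\<tau> = udiag n V g"
    using hermitian_spectral[OF assms(5)] by blast
  interpret channel_bases n \<Phi> \<Phi>' U V
    using assms(2,3) U V by unfold_locales
  define F0 where "F0 = free_energy n \<beta> H0"
  define F1 where "F1 = free_energy n \<beta> H\<tau>"
  define p where "p = (\<lambda>k. exp (\<beta> * (F0 - h k)))"
  define q where "q = (\<lambda>k. exp (\<beta> * (F1 - g k)))"
  have \<Gamma>0: "gibbs n \<beta> H0 = udiag n U p" and p1: "(\<Sum>k<n. p k) = 1"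
    using gibbs_udiag[OF U assms(1), of \<beta> h] assms(6) by (simp_all add: H0 F0_def p_def)
  have \<Gamma>\<tau>: "gibbs n \<beta> H\<tau> = udiag n V q"
    using gibbs_udiag[OF V assms(1), of \<beta> g] assms(6) by (simp add: H\<tau> F1_def q_def)
  have "8 / pi\<^sup>2 * (bures_angle (udiag n U p) ((1 / trace (\<Phi>' (udiag n V q))) \<cdot>\<^sub>m \<Phi>' (udiag n V q)))\<^sup>2
      - ln (Re (trace (\<Phi>' (udiag n V q))))
    \<le> \<beta> * ((Re (trace (\<Phi> (udiag n U p) * udiag n V g)) - Re (trace (udiag n U p * udiag n U h))) - (F1 - F0))"
    by (rule bures_dissipation_bound) (use assms(1) p1 in \<open>simp_all add: p_def q_def\<close>)
  then show ?thesis unfolding Let_def \<Gamma>0 \<Gamma>\<tau> using H0 H\<tau> by (simp add: F0_def F1_def)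
qed

end
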